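(* Let $h\ge 3$ and let $m$ be a positive integer with $\omega=\omega(m)\ge 2$, and let $\varpi=\varpi(m)$. Then there are $\mathrm{CC}^h[m]$-circuits of size $2^{O(n^{1/((\omega-1)(h-2)+\varpi)}\log n)}$ computing the $n$-ary conjunction $\mathrm{AND}_n$.
   Context: For an integer $m\ge 1$ and $A\subseteq\{0,\dots,m-1\}$, a gate $\mathrm{MOD}_m^A$ takes finitely many Boolean inputs (counted with multiplicity, since a wire may be connected several times) and outputs $1$ if their sum modulo $m$ lies in $A$, and $0$ otherwise. A $\mathrm{CC}^h[m]$-circuit is a Boolean circuit of depth $h$ all of whose gates are of the form $\mathrm{MOD}_m^A$ (with $A$ possibly different for each gate), with Boolean variable inputs (constants allowed) and multiple wires allowed. The size of a circuit is its number of gates. $\omega(m)$ is the number of distinct prime divisors of $m$, and $\varpi(m)$ is the number of prime divisors $p$ of $m$ with $p\ge\omega(m)$. *)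

theory Defs
  imports Complex_Main "HOL-Computational_Algebra.Primes"
begin

text \<open>A CC[m]-circuit on n variables, given as a list of gates in topological order.
  Gate k (for k < csize C) is a MOD_m^A gate with A = cgA C k.  Its inputs (with multiplicity)
  are: cgconst C k wires from the constant 1 (constant-0 wires do not affect the sum),
  cgvar C k i wires from variable i (i < n), and cggate C k j wires from gate j (j < k).\<close>

record circuit =
  csize :: nat
  cgA :: "nat \<Rightarrow> nat set"
  cgconst :: "nat \<Rightarrow> nat"
  cgvar :: "nat \<Rightarrow> nat \<Rightarrow> nat"
  cggate :: "nat \<Rightarrow> nat \<Rightarrow> nat"
  cout :: nat

primrec gate_vals :: "nat \<Rightarrow> nat \<Rightarrow> circuit \<Rightarrow> (nat \<Rightarrow> bool) \<Rightarrow> nat \<Rightarrow> bool list" where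
  "gate_vals m n C x 0 = []"
| "gate_vals m n C x (Suc k) =
     (let vs = gate_vals m n C x k in
      vs @ [ (cgconst C k + (\<Sum>i<n. cgvar C k i * of_bool (x i))
               + (\<Sum>j<k. cggate C k j * of_bool (vs ! j))) mod m \<in> cgA C k ])"

definition circ_eval :: "nat \<Rightarrow> nat \<Rightarrow> circuit \<Rightarrow> (nat \<Rightarrow> bool) \<Rightarrow> bool" where
  "circ_eval m n C x = gate_vals m n C x (csize C) ! cout C"

primrec gate_depths :: "circuit \<Rightarrow> nat \<Rightarrow> nat list" where
  "gate_depths C 0 = []"
| "gate_depths C (Suc k) =
     (let ds = gate_depths C k in
      ds @ [Suc (Max (insert 0 {ds ! j | j. j < k \<and> cggate C k j > 0}))])"

definition circ_depth :: "circuit \<Rightarrow> nat" where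
  "circ_depth C = Max (insert 0 (set (gate_depths C (csize C))))"

definition is_CC_circuit :: "nat \<Rightarrow> nat \<Rightarrow> nat \<Rightarrow> circuit \<Rightarrow> bool" where
  "is_CC_circuit h m n C \<longleftrightarrow> cout C < csize C \<and> (\<forall>k < csize C. cgA C k \<subseteq> {..<m})
      \<and> circ_depth C = h"

definition computes :: "nat \<Rightarrow> nat \<Rightarrow> circuit \<Rightarrow> ((nat \<Rightarrow> bool) \<Rightarrow> bool) \<Rightarrow> bool" where
  "computes m n C f \<longleftrightarrow> (\<forall>x. circ_eval m n C x = f x)"

definition AND_fun :: "nat \<Rightarrow> (nat \<Rightarrow> bool) \<Rightarrow> bool" where
  "AND_fun n x \<longleftrightarrow> (\<forall>i<n. x i)"

definition omega_m :: "nat \<Rightarrow> nat" where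
  "omega_m m = card (prime_factors m)"

definition varpi_m :: "nat \<Rightarrow> nat" where
  "varpi_m m = card {p \<in> prime_factors m. p \<ge> omega_m m}"

end

theory Submission
  imports Defs "HOL-Library.FuncSet" "HOL-Library.Multiset" "HOL-Number_Theory.Residues"
begin

datatype formula = Input nat | Gate "nat set" "formula list"

fun eval_formula :: "nat \<Rightarrow> (nat \<Rightarrow> bool) \<Rightarrow> formula \<Rightarrow> bool" where
  "eval_formula m x (Input i) = x i"
| "eval_formula m x (Gate A Fs) = ((\<Sum>F\<leftarrow>Fs. of_bool (eval_formula m x F) :: nat) mod m \<in> A)"

fun formula_depth :: "formula \<Rightarrow> nat" where
  "formula_depth (Input i) = 0"
| "formula_depth (Gate A Fs) = Suc (Max (insert 0 (set (map formula_depth Fs))))"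

fun formula_size :: "formula \<Rightarrow> nat" where
  "formula_size (Input i) = 0"
| "formula_size (Gate A Fs) = Suc (\<Sum>F\<leftarrow>Fs. formula_size F)"

fun formula_vars :: "formula \<Rightarrow> nat set" where
  "formula_vars (Input i) = {i}"
| "formula_vars (Gate A Fs) = \<Union> (set (map formula_vars Fs))"

fun formula_wf :: "nat \<Rightarrow> formula \<Rightarrow> bool" where
  "formula_wf m (Input i) = True"
| "formula_wf m (Gate A Fs) = (A \<subseteq> {..<m} \<and> (\<forall>F\<in>set Fs. formula_wf m F))"

text \<open>A gate consists of its accepting set
  and the number of wires it receives from each input and from each earlier gate; a wire is
  \<^term>\<open>Inl i\<close> for input \<open>i\<close> and \<^term>\<open>Inr j\<close> for gate \<open>j\<close>.\<close>

type_synonym gate = "nat set \<times> (nat \<Rightarrow> nat) \<times> (nat \<Rightarrow> nat)"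
type_synonym wire = "nat + nat"

definition gate_of :: "nat set \<Rightarrow> wire list \<Rightarrow> gate" where
  "gate_of A ws = (A, (\<lambda>i. count_list ws (Inl i)), (\<lambda>j. count_list ws (Inr j)))"

fun compile :: "formula \<Rightarrow> gate list \<Rightarrow> gate list \<times> wire"
and compile_list :: "formula list \<Rightarrow> gate list \<Rightarrow> gate list \<times> wire list" where
  "compile (Input i) gs = (gs, Inl i)"
| "compile (Gate A Fs) gs = (let (gs', ws) = compile_list Fs gs in (gs' @ [gate_of A ws], Inr (length gs')))"
| "compile_list [] gs = (gs, [])"
| "compile_list (F # Fs) gs =
    (let (gs1, w) = compile F gs; (gs2, ws) = compile_list Fs gs1 in (gs2, w # ws))"

definition circuit_of :: "gate list \<Rightarrow> nat \<Rightarrow> circuit" where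
  "circuit_of gs out = \<lparr>csize = length gs, cgA = (\<lambda>k. fst (gs ! k)), cgconst = (\<lambda>_. 0),
     cgvar = (\<lambda>k. fst (snd (gs ! k))), cggate = (\<lambda>k. snd (snd (gs ! k))), cout = out\<rparr>"

definition gate_list_vals :: "nat \<Rightarrow> nat \<Rightarrow> gate list \<Rightarrow> (nat \<Rightarrow> bool) \<Rightarrow> bool list" where
  "gate_list_vals m n gs x = gate_vals m n (circuit_of gs 0) x (length gs)"

definition gate_list_depths :: "gate list \<Rightarrow> nat list" where
  "gate_list_depths gs = gate_depths (circuit_of gs 0) (length gs)"

definition wire_ok :: "nat \<Rightarrow> nat \<Rightarrow> wire \<Rightarrow> bool" where
  "wire_ok n k w = (case w of Inl i \<Rightarrow> i < n | Inr j \<Rightarrow> j < k)"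

definition wire_val :: "nat \<Rightarrow> nat \<Rightarrow> gate list \<Rightarrow> (nat \<Rightarrow> bool) \<Rightarrow> wire \<Rightarrow> bool" where
  "wire_val m n gs x w = (case w of Inl i \<Rightarrow> x i | Inr j \<Rightarrow> gate_list_vals m n gs x ! j)"

definition wire_depth :: "gate list \<Rightarrow> wire \<Rightarrow> nat" where
  "wire_depth gs w = (case w of Inl i \<Rightarrow> 0 | Inr j \<Rightarrow> gate_list_depths gs ! j)"

lemma length_gate_vals [simp]: "length (gate_vals m n C x k) = k"
  by (induction k) (auto simp: Let_def)

lemma length_gate_depths [simp]: "length (gate_depths C k) = k"
  by (induction k) (auto simp: Let_def)

lemma gate_vals_cong:
  assumes "\<And>j. j < k \<Longrightarrow> cgA C j = cgA C' j \<and> cgconst C j = cgconst C' j \<and>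
              cgvar C j = cgvar C' j \<and> cggate C j = cggate C' j"
  shows "gate_vals m n C x k = gate_vals m n C' x k"
  using assms by (induction k) (auto simp: Let_def)

lemma gate_depths_cong:
  assumes "\<And>j. j < k \<Longrightarrow> cggate C j = cggate C' j"
  shows "gate_depths C k = gate_depths C' k"
  using assms by (induction k) (auto simp: Let_def)

lemma take_gate_vals: "k \<le> k' \<Longrightarrow> take k (gate_vals m n C x k') = gate_vals m n C x k"
  by (induction k') (auto simp: Let_def le_Suc_eq)

lemma take_gate_depths: "k \<le> k' \<Longrightarrow> take k (gate_depths C k') = gate_depths C k"
  by (induction k') (auto simp: Let_def le_Suc_eq)

lemma length_gate_list_vals [simp]: "length (gate_list_vals m n gs x) = length gs"
  by (simp add: gate_list_vals_def circuit_of_def)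

lemma length_gate_list_depths [simp]: "length (gate_list_depths gs) = length gs"
  by (simp add: gate_list_depths_def circuit_of_def)

lemma gate_vals_circuit_of_append:
  "k \<le> length gs \<Longrightarrow> gate_vals m n (circuit_of (gs @ ext) out) x k = gate_vals m n (circuit_of gs out') x k"
  by (rule gate_vals_cong) (auto simp: circuit_of_def nth_append)

lemma gate_depths_circuit_of_append:
  "k \<le> length gs \<Longrightarrow> gate_depths (circuit_of (gs @ ext) out) k = gate_depths (circuit_of gs out') k"
  by (rule gate_depths_cong) (auto simp: circuit_of_def nth_append)

lemma take_gate_list_vals:
  "take (length gs) (gate_list_vals m n (gs @ ext) x) = gate_list_vals m n gs x"
  unfolding gate_list_vals_def
  by (simp add: take_gate_vals gate_vals_circuit_of_append[where out'=0])

lemma take_gate_list_depths: "take (length gs) (gate_list_depths (gs @ ext)) = gate_list_depths gs"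
  unfolding gate_list_depths_def
  by (simp add: take_gate_depths gate_depths_circuit_of_append[where out'=0])

lemma nth_gate_list_vals_append:
  "j < length gs \<Longrightarrow> gate_list_vals m n (gs @ ext) x ! j = gate_list_vals m n gs x ! j"
  by (metis nth_take take_gate_list_vals)

lemma nth_gate_list_depths_append:
  "j < length gs \<Longrightarrow> gate_list_depths (gs @ ext) ! j = gate_list_depths gs ! j"
  by (metis nth_take take_gate_list_depths)

lemma wire_val_Inr [simp]: "wire_val m n gs x (Inr j) = gate_list_vals m n gs x ! j"
  by (simp add: wire_val_def)

lemma wire_depth_Inr [simp]: "wire_depth gs (Inr j) = gate_list_depths gs ! j"
  by (simp add: wire_depth_def)

lemma wire_ok_mono: "wire_ok n k w \<Longrightarrow> k \<le> k' \<Longrightarrow> wire_ok n k' w"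
  by (auto simp: wire_ok_def split: sum.splits)

lemma wire_val_append:
  "wire_ok n (length gs) w \<Longrightarrow> wire_val m n (gs @ ext) x w = wire_val m n gs x w"
  by (auto simp: wire_val_def wire_ok_def nth_gate_list_vals_append split: sum.splits)

lemma wire_depth_append: "wire_ok n (length gs) w \<Longrightarrow> wire_depth (gs @ ext) w = wire_depth gs w"
  by (auto simp: wire_depth_def wire_ok_def nth_gate_list_depths_append split: sum.splits)

lemma sum_list_wires:
  fixes g :: "wire \<Rightarrow> nat"
  assumes "\<forall>w\<in>set ws. wire_ok n k w"
  shows "(\<Sum>w\<leftarrow>ws. g w) =
    (\<Sum>i<n. count_list ws (Inl i) * g (Inl i)) + (\<Sum>j<k. count_list ws (Inr j) * g (Inr j))"
proof -
  have "set ws \<subseteq> Inl ` {..<n} \<union> Inr ` {..<k}"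
  proof
    fix w assume "w \<in> set ws"
    with assms show "w \<in> Inl ` {..<n} \<union> Inr ` {..<k}" by (cases w) (auto simp: wire_ok_def)
  qed
  then have "(\<Sum>w\<leftarrow>ws. g w) = (\<Sum>w\<in>Inl ` {..<n} \<union> Inr ` {..<k}. count_list ws w * g w)"
    by (rule sum_list_map_eq_sum_count2) simp
  also have "\<dots> = (\<Sum>w\<in>Inl ` {..<n}. count_list ws w * g w) + (\<Sum>w\<in>Inr ` {..<k}. count_list ws w * g w)"
    by (rule sum.union_disjoint) auto
  finally show ?thesis
    by (simp add: sum.reindex)
qed

lemma gate_list_vals_snoc:
  assumes "\<forall>w\<in>set ws. wire_ok n (length gs) w"
  shows "gate_list_vals m n (gs @ [gate_of A ws]) x =
    gate_list_vals m n gs x @ [(\<Sum>w\<leftarrow>ws. of_bool (wire_val m n gs x w)) mod m \<in> A]"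
proof -
  have "gate_vals m n (circuit_of (gs @ [gate_of A ws]) 0) x (length gs) = gate_list_vals m n gs x"
    unfolding gate_list_vals_def by (rule gate_vals_circuit_of_append) simp
  then show ?thesis
    unfolding gate_list_vals_def[of m n "gs @ [_]"] sum_list_wires[OF assms]
    by (simp add: Let_def circuit_of_def gate_of_def wire_val_def gate_list_vals_def)
qed

lemma gate_list_depths_snoc:
  assumes "\<forall>w\<in>set ws. wire_ok n (length gs) w"
  shows "gate_list_depths (gs @ [gate_of A ws]) =
    gate_list_depths gs @ [Suc (Max (insert 0 (wire_depth gs ` set ws)))]"
proof -
  have prefix: "gate_depths (circuit_of (gs @ [gate_of A ws]) 0) (length gs) = gate_list_depths gs"
    unfolding gate_list_depths_def by (rule gate_depths_circuit_of_append) simp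
  have count_pos: "count_list ws w > 0 \<longleftrightarrow> w \<in> set ws" for w
    by (metis count_list_0_iff neq0_conv)
  have "insert 0 {gate_list_depths gs ! j | j. j < length gs \<and> count_list ws (Inr j) > 0}
      = insert 0 (wire_depth gs ` set ws)"
  proof (intro equalityI subsetI)
    fix d assume "d \<in> insert 0 {gate_list_depths gs ! j | j. j < length gs \<and> count_list ws (Inr j) > 0}"
    then consider "d = 0" | j where "Inr j \<in> set ws" "d = gate_list_depths gs ! j"
      by (auto simp: count_pos)
    then show "d \<in> insert 0 (wire_depth gs ` set ws)"
      by cases (force simp: wire_depth_def)+
  next
    fix d assume "d \<in> insert 0 (wire_depth gs ` set ws)"
    then consider "d = 0" | i where "Inl i \<in> set ws" "d = 0" | j where "Inr j \<in> set ws" "d = gate_list_depths gs ! j"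
      by (auto simp: wire_depth_def split: sum.splits)
    then show "d \<in> insert 0 {gate_list_depths gs ! j | j. j < length gs \<and> count_list ws (Inr j) > 0}"
      by cases (use assms in \<open>auto simp: wire_ok_def count_pos\<close>)
  qed
  then show ?thesis
    unfolding gate_list_depths_def[of "gs @ [_]"] using prefix
    by (simp add: Let_def circuit_of_def gate_of_def)
qed

definition wire_computes :: "nat \<Rightarrow> nat \<Rightarrow> gate list \<Rightarrow> wire \<Rightarrow> formula \<Rightarrow> bool" where
  "wire_computes m n gs w F \<longleftrightarrow> wire_ok n (length gs) w \<and>
     (\<forall>x. wire_val m n gs x w = eval_formula m x F) \<and> wire_depth gs w = formula_depth F"

lemma wire_computes_append: "wire_computes m n gs w F \<Longrightarrow> wire_computes m n (gs @ ext) w F"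
  by (auto simp: wire_computes_def wire_val_append wire_depth_append intro: wire_ok_mono)

lemma wire_computes_gate:
  assumes ws: "list_all2 (wire_computes m n gs) ws Fs"
  shows "wire_computes m n (gs @ [gate_of A ws]) (Inr (length gs)) (Gate A Fs)"
proof -
  have ok: "\<forall>w\<in>set ws. wire_ok n (length gs) w"
    using ws by (auto simp: list_all2_conv_all_nth in_set_conv_nth wire_computes_def)
  have vals: "map (wire_val m n gs x) ws = map (eval_formula m x) Fs" for x
    using ws by (simp add: list_all2_conv_all_nth list_eq_iff_nth_eq wire_computes_def)
  have "(\<Sum>w\<leftarrow>ws. of_bool (wire_val m n gs x w) :: nat) = (\<Sum>F\<leftarrow>Fs. of_bool (eval_formula m x F))" for x
    using arg_cong[OF vals[of x], of "\<lambda>bs. (\<Sum>b\<leftarrow>bs. of_bool b) :: nat"] by (simp add: o_def)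
  moreover have "map (wire_depth gs) ws = map formula_depth Fs"
    using ws by (simp add: list_all2_conv_all_nth list_eq_iff_nth_eq wire_computes_def)
  then have "wire_depth gs ` set ws = set (map formula_depth Fs)"
    by (metis list.set_map)
  ultimately show ?thesis
    unfolding wire_computes_def
    by (simp add: wire_ok_def gate_list_vals_snoc[OF ok] gate_list_depths_snoc[OF ok] nth_append)
qed

lemma compile_correct:
  "compile F gs = (gs', w) \<Longrightarrow> formula_vars F \<subseteq> {..<n} \<Longrightarrow>
     (\<exists>ext. gs' = gs @ ext \<and> length ext = formula_size F) \<and> wire_computes m n gs' w F \<and>
     (\<forall>j. length gs \<le> j \<and> j < length gs' \<longrightarrow> gate_list_depths gs' ! j \<le> formula_depth F)"
  "compile_list Fs gs = (gs', ws) \<Longrightarrow> (\<forall>F\<in>set Fs. formula_vars F \<subseteq> {..<n}) \<Longrightarrow>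
     (\<exists>ext. gs' = gs @ ext \<and> length ext = (\<Sum>F\<leftarrow>Fs. formula_size F)) \<and>
     list_all2 (wire_computes m n gs') ws Fs \<and>
     (\<forall>j. length gs \<le> j \<and> j < length gs' \<longrightarrow>
       gate_list_depths gs' ! j \<le> Max (insert 0 (set (map formula_depth Fs))))"
proof (induction F gs and Fs gs arbitrary: gs' w and gs' ws rule: compile_compile_list.induct)
  case (1 i gs)
  then show ?case by (auto simp: wire_computes_def wire_ok_def wire_val_def wire_depth_def)
next
  case (2 A Fs gs)
  obtain gs1 ws where c: "compile_list Fs gs = (gs1, ws)" by (cases "compile_list Fs gs") auto
  from 2(2) c have gs': "gs' = gs1 @ [gate_of A ws]" and w: "w = Inr (length gs1)" by auto
  have "\<forall>F\<in>set Fs. formula_vars F \<subseteq> {..<n}" using 2(3) by auto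
  note IH = 2(1)[OF c this]
  obtain ext where ext: "gs1 = gs @ ext" "length ext = (\<Sum>F\<leftarrow>Fs. formula_size F)"
    using IH[THEN conjunct1] by blast
  have top: "wire_computes m n gs' w (Gate A Fs)"
    unfolding gs' w by (rule wire_computes_gate[OF IH[THEN conjunct2, THEN conjunct1]])
  have "gate_list_depths gs' ! j \<le> formula_depth (Gate A Fs)" if j: "length gs \<le> j" "j < length gs'" for j
  proof (cases "j < length gs1")
    case True
    then have "gate_list_depths gs' ! j = gate_list_depths gs1 ! j"
      unfolding gs' by (rule nth_gate_list_depths_append)
    then show ?thesis using IH True j by (simp add: le_Suc_eq)
  next
    case False
    then have "j = length gs1" using j gs' by auto
    then show ?thesis using top w by (simp add: wire_computes_def wire_depth_def)
  qed
  then show ?case using ext gs' top by auto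
next
  case (3 gs)
  then show ?case by auto
next
  case (4 F Fs gs)
  obtain gs1 w1 where c1: "compile F gs = (gs1, w1)" by (cases "compile F gs") auto
  obtain gs2 ws2 where c2: "compile_list Fs gs1 = (gs2, ws2)" by (cases "compile_list Fs gs1") auto
  from 4(3) c1 c2 have gs': "gs' = gs2" and ws: "ws = w1 # ws2" by auto
  have "formula_vars F \<subseteq> {..<n}" "\<forall>F\<in>set Fs. formula_vars F \<subseteq> {..<n}" using 4(4) by auto
  note head = 4(1)[OF c1 this(1)] and tail = 4(2)[OF c1[symmetric] refl c2 this(2)]
  obtain e1 where e1: "gs1 = gs @ e1" "length e1 = formula_size F"
    using head[THEN conjunct1] by blast
  obtain e2 where e2: "gs2 = gs1 @ e2" "length e2 = (\<Sum>F\<leftarrow>Fs. formula_size F)"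
    using tail[THEN conjunct1] by blast
  have "list_all2 (wire_computes m n gs') ws (F # Fs)"
    using head tail wire_computes_append[of m n gs1 w1 F e2] unfolding gs' ws e2 by simp
  moreover have "gate_list_depths gs' ! j \<le> Max (insert 0 (set (map formula_depth (F # Fs))))"
    if j: "length gs \<le> j" "j < length gs'" for j
  proof (cases "j < length gs1")
    case True
    then have "gate_list_depths gs' ! j = gate_list_depths gs1 ! j"
      unfolding gs' e2 by (rule nth_gate_list_depths_append)
    also have "\<dots> \<le> formula_depth F" using head True j by blast
    also have "\<dots> \<le> Max (insert 0 (set (map formula_depth (F # Fs))))" by (rule Max_ge) auto
    finally show ?thesis .
  next
    case False
    then have "gate_list_depths gs' ! j \<le> Max (insert 0 (set (map formula_depth Fs)))"
      using tail j gs' by simp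
    also have "\<dots> \<le> Max (insert 0 (set (map formula_depth (F # Fs))))" by (rule Max_mono) auto
    finally show ?thesis .
  qed
  ultimately show ?case using e1 e2 gs' by auto
qed

lemma compile_accept_sets:
  "compile F gs = (gs', w) \<Longrightarrow> formula_wf m F \<Longrightarrow> \<forall>g\<in>set gs. fst g \<subseteq> {..<m} \<Longrightarrow>
     \<forall>g\<in>set gs'. fst g \<subseteq> {..<m}"
  "compile_list Fs gs = (gs', ws) \<Longrightarrow> \<forall>F\<in>set Fs. formula_wf m F \<Longrightarrow> \<forall>g\<in>set gs. fst g \<subseteq> {..<m} \<Longrightarrow>
     \<forall>g\<in>set gs'. fst g \<subseteq> {..<m}"
proof (induction F gs and Fs gs arbitrary: gs' w and gs' ws rule: compile_compile_list.induct)
  case (2 A Fs gs)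
  obtain gs1 ws where c: "compile_list Fs gs = (gs1, ws)" by (cases "compile_list Fs gs") auto
  have "\<forall>g\<in>set gs1. fst g \<subseteq> {..<m}" using 2(1)[OF c] 2(3,4) by simp
  moreover have "gs' = gs1 @ [gate_of A ws]" using 2(2) c by simp
  moreover have "A \<subseteq> {..<m}" using 2(3) by simp
  ultimately show ?case by (simp add: gate_of_def)
next
  case (4 F Fs gs)
  obtain gs1 w1 where c1: "compile F gs = (gs1, w1)" by (cases "compile F gs") auto
  obtain gs2 ws2 where c2: "compile_list Fs gs1 = (gs2, ws2)" by (cases "compile_list Fs gs1") auto
  from 4(3) c1 c2 have "gs' = gs2" by auto
  moreover have "\<forall>g\<in>set gs1. fst g \<subseteq> {..<m}" using 4(1)[OF c1] 4(4,5) by simp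
  ultimately show ?case using 4(2)[OF c1[symmetric] refl c2] 4(4) by simp
qed auto

lemma formula_circuit:
  assumes "formula_vars F \<subseteq> {..<n}" "formula_wf m F" "formula_depth F = h" "h > 0"
  shows "\<exists>C. is_CC_circuit h m n C \<and> (\<forall>x. circ_eval m n C x = eval_formula m x F) \<and>
    csize C = formula_size F"
proof -
  obtain A Fs where F: "F = Gate A Fs"
    using assms(3,4) by (cases F) auto
  obtain gs1 ws where c: "compile_list Fs [] = (gs1, ws)" by (cases "compile_list Fs []") auto
  define gs where "gs = gs1 @ [gate_of A ws]"
  have "compile F [] = (gs, Inr (length gs1))"
    using c by (simp add: F gs_def)
  note correct = compile_correct(1)[OF this assms(1), of m]
  define C where "C = circuit_of gs (length gs1)"
  have size: "csize C = length gs" by (simp add: C_def circuit_of_def)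
  have vals: "gate_vals m n C x (csize C) = gate_list_vals m n gs x" for x
    unfolding size unfolding C_def gate_list_vals_def by (rule gate_vals_cong) (auto simp: circuit_of_def)
  have depths: "gate_depths C (csize C) = gate_list_depths gs"
    unfolding size unfolding C_def gate_list_depths_def by (rule gate_depths_cong) (auto simp: circuit_of_def)
  have "circ_eval m n C x = eval_formula m x F" for x
    using correct vals by (simp add: circ_eval_def C_def circuit_of_def wire_computes_def wire_val_def)
  moreover have "circ_depth C = h"
  proof -
    have "\<forall>d\<in>set (gate_list_depths gs). d \<le> h"
      using correct assms(3) by (auto simp: in_set_conv_nth)
    moreover have "gate_list_depths gs ! length gs1 = h"
      using correct assms(3) by (simp add: wire_computes_def wire_depth_def)
    then have "h \<in> set (gate_list_depths gs)"
      by (metis gs_def length_append_singleton length_gate_list_depths lessI nth_mem)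
    ultimately show ?thesis
      unfolding circ_depth_def depths by (intro Max_eqI) auto
  qed
  moreover have "\<forall>k<csize C. cgA C k \<subseteq> {..<m}"
    using compile_accept_sets(1)[OF \<open>compile F [] = _\<close> assms(2)]
    by (simp add: size) (simp add: C_def circuit_of_def)
  moreover have "cout C < csize C" by (simp add: size C_def circuit_of_def gs_def)
  moreover have "csize C = formula_size F" using correct by (auto simp: size)
  ultimately show ?thesis unfolding is_CC_circuit_def by blast
qed


text \<open>A system over a set \<open>Q\<close> of primes is a multiset of formulas \<open>F\<close> with integer weights \<open>w q\<close>,
  together with targets \<open>T q\<close>; it holds at \<open>x\<close> if, for every \<open>q \<in> Q\<close>, the weighted number of
  satisfied formulas is congruent to \<open>T q\<close> modulo \<open>q\<close>.\<close>

definition weighted_count :: "nat \<Rightarrow> (nat \<Rightarrow> bool) \<Rightarrow> (formula \<times> (nat \<Rightarrow> int)) multiset \<Rightarrow> nat \<Rightarrow> int" where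
  "weighted_count m x M q = (\<Sum>p\<in>#M. snd p q * of_bool (eval_formula m x (fst p)))"

definition system_holds ::
  "nat \<Rightarrow> nat set \<Rightarrow> (formula \<times> (nat \<Rightarrow> int)) multiset \<Rightarrow> (nat \<Rightarrow> int) \<Rightarrow> (nat \<Rightarrow> bool) \<Rightarrow> bool" where
  "system_holds m Q M T x \<longleftrightarrow> (\<forall>q\<in>Q. [weighted_count m x M q = T q] (mod int q))"

definition total_size :: "(formula \<times> 'a) multiset \<Rightarrow> nat" where
  "total_size M = (\<Sum>p\<in>#M. formula_size (fst p))"

definition formula_ok :: "nat \<Rightarrow> nat \<Rightarrow> nat \<Rightarrow> formula \<Rightarrow> bool" where
  "formula_ok m n d F \<longleftrightarrow> formula_vars F \<subseteq> {..<n} \<and> formula_wf m F \<and> formula_depth F \<le> d"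

definition input_copies :: "nat \<Rightarrow> nat set \<Rightarrow> (nat \<Rightarrow> int) \<Rightarrow> nat" where
  "input_copies m Q w = (\<Sum>q\<in>Q. (m div q) * nat (w q mod int q))"

definition gate_inputs :: "nat \<Rightarrow> nat set \<Rightarrow> (formula \<times> (nat \<Rightarrow> int)) multiset \<Rightarrow> formula multiset" where
  "gate_inputs m Q M = (\<Sum>p\<in>#M. replicate_mset (input_copies m Q (snd p)) (fst p))"

definition crt_accept_set :: "nat \<Rightarrow> nat set \<Rightarrow> (nat \<Rightarrow> int) \<Rightarrow> nat set" where
  "crt_accept_set m Q T =
    {t. t < m \<and> (\<forall>q\<in>Q. [int t = int (m div q) * T q] (mod int (q ^ multiplicity q m)))}"

lemma card_prime_factors_le: "m > 0 \<Longrightarrow> card (prime_factors m) \<le> m"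
proof -
  assume "m > 0"
  have "prime_factors m \<subseteq> {1..m}"
    using \<open>m > 0\<close> by (auto simp: in_prime_factors_iff dvd_imp_le prime_gt_0_nat Suc_le_eq)
  then have "card (prime_factors m) \<le> card {1..m}" by (rule card_mono[rotated]) auto
  then show ?thesis by simp
qed

lemma cofactor_cong_iff:
  fixes a b :: int
  assumes q: "q \<in> prime_factors m"
  shows "[int (m div q) * a = int (m div q) * b] (mod int (q ^ multiplicity q m)) \<longleftrightarrow> [a = b] (mod int q)"
proof -
  define e where "e = multiplicity q m"
  have qp: "prime q" "q dvd m" and m: "m \<noteq> 0" using q by (auto simp: in_prime_factors_iff)
  then have e: "e \<ge> 1" unfolding e_def
    by (simp add: Suc_le_eq prime_multiplicity_gt_zero_iff)
  obtain u where mu: "m = q ^ e * u" and cop: "\<not> q dvd u"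
    using multiplicity_decompose'[OF m] qp unfolding e_def by (metis not_prime_unit)
  have qe: "q ^ e = q * q ^ (e - 1)" using e by (cases e) auto
  then have "m div q = q ^ (e - 1) * u" using mu qp by (simp add: mult.assoc prime_gt_0_nat)
  then have diff: "int (m div q) * a - int (m div q) * b = int (q ^ (e - 1)) * (int u * (a - b))"
    by (simp add: algebra_simps)
  have "int (q ^ (e - 1)) \<noteq> 0" using qp by (simp add: prime_gt_0_nat)
  then have "[int (m div q) * a = int (m div q) * b] (mod int (q ^ e)) \<longleftrightarrow> int q dvd int u * (a - b)"
    unfolding cong_iff_dvd_diff diff qe using qp by (simp add: mult.commute prime_gt_0_nat)
  also have "\<dots> \<longleftrightarrow> int q dvd a - b"
    using qp cop by (simp add: prime_dvd_mult_iff)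
  finally show ?thesis unfolding e_def by (simp add: cong_iff_dvd_diff)
qed

text \<open>The Chinese remainder theorem: weighting the count modulo \<open>q\<close> by \<open>m div q\<close> lets a single
  modulo-\<open>m\<close> sum carry all the counts at once.\<close>

lemma mod_sum_in_crt_accept_set_iff:
  fixes L :: "nat \<Rightarrow> nat" and T :: "nat \<Rightarrow> int"
  assumes Q: "Q \<subseteq> prime_factors m" and m: "m > 0"
  shows "(\<Sum>q\<in>Q. (m div q) * L q) mod m \<in> crt_accept_set m Q T \<longleftrightarrow> (\<forall>q\<in>Q. [int (L q) = T q] (mod int q))"
proof -
  define S where "S = (\<Sum>q\<in>Q. (m div q) * L q)"
  have S_cong: "[int (S mod m) = int (m div q) * int (L q)] (mod int (q ^ multiplicity q m))" if q: "q \<in> Q" for q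
  proof -
    have qm: "q ^ multiplicity q m dvd m" by (rule multiplicity_dvd)
    have other: "q ^ multiplicity q m dvd m div q'" if "q' \<in> Q - {q}" for q'
    proof -
      have "prime q" "prime q'" "q' dvd m" "q \<noteq> q'" using Q q that by auto
      then have "coprime (q ^ multiplicity q m) q'"
        by (simp add: primes_coprime coprime_power_left_iff)
      moreover have "q ^ multiplicity q m dvd (m div q') * q'" using qm \<open>q' dvd m\<close> by simp
      ultimately show ?thesis by (meson coprime_dvd_mult_left_iff)
    qed
    have "finite Q" using Q finite_subset by blast
    then have S: "S = (m div q) * L q + (\<Sum>q'\<in>Q - {q}. (m div q') * L q')"
      unfolding S_def using q by (simp add: sum.remove)
    have "[(\<Sum>q'\<in>Q - {q}. (m div q') * L q') = 0] (mod q ^ multiplicity q m)"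
      unfolding cong_0_iff by (intro dvd_sum dvd_mult2 other)
    then have "[S = (m div q) * L q + 0] (mod q ^ multiplicity q m)"
      unfolding S by (intro cong_add cong_refl)
    moreover have "[S mod m = S] (mod q ^ multiplicity q m)"
      using qm by (meson cong_dvd_modulus_nat cong_mod_left cong_refl)
    ultimately show ?thesis
      by (metis add_0_right cong_int_iff cong_trans of_nat_mult of_nat_power)
  qed
  have "[int (S mod m) = int (m div q) * T q] (mod int (q ^ multiplicity q m)) \<longleftrightarrow>
      [int (L q) = T q] (mod int q)" if q: "q \<in> Q" for q
  proof -
    have "[int (S mod m) = int (m div q) * T q] (mod int (q ^ multiplicity q m)) \<longleftrightarrow>
        [int (m div q) * int (L q) = int (m div q) * T q] (mod int (q ^ multiplicity q m))"
      using S_cong[OF q] by (meson cong_sym cong_trans)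
    also have "\<dots> \<longleftrightarrow> [int (L q) = T q] (mod int q)"
      using Q q by (intro cofactor_cong_iff) auto
    finally show ?thesis .
  qed
  then show ?thesis
    unfolding S_def[symmetric] crt_accept_set_def using m by auto
qed

lemma input_copies_le:
  assumes Q: "Q \<subseteq> prime_factors m" and m: "m > 0"
  shows "input_copies m Q w \<le> m * m"
proof -
  have "input_copies m Q w \<le> (\<Sum>q\<in>Q. m)"
    unfolding input_copies_def
  proof (intro sum_mono)
    fix q assume "q \<in> Q"
    then have q0: "q > 0" using Q prime_gt_0_nat by auto
    then have "w q mod int q < int q" by simp
    then have "nat (w q mod int q) \<le> q" by linarith
    then have "(m div q) * nat (w q mod int q) \<le> (m div q) * q" by simp
    also have "\<dots> \<le> m" by simp
    finally show "(m div q) * nat (w q mod int q) \<le> m" .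
  qed
  also have "\<dots> = card Q * m" by simp
  also have "card Q \<le> card (prime_factors m)" using Q by (intro card_mono) auto
  then have "card Q * m \<le> m * m" using card_prime_factors_le[OF m] by simp
  finally show ?thesis .
qed

lemma sum_mset_mod_cong:
  fixes q :: int
  shows "[(\<Sum>p\<in>#M. (f p mod q) * g p) = (\<Sum>p\<in>#M. f p * g p)] (mod q)"
proof (induction M)
  case (add x M)
  have "[(f x mod q) * g x = f x * g x] (mod q)" by (simp add: cong_def mod_mult_left_eq)
  then show ?case using add by (simp add: cong_add)
qed simp

lemma sum_mset_gate_inputs:
  "(\<Sum>F\<in>#gate_inputs m Q M. g F) = (\<Sum>p\<in>#M. input_copies m Q (snd p) * g (fst p))"
  unfolding gate_inputs_def by (induction M) auto

lemma system_gate: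
  assumes Q: "Q \<subseteq> prime_factors m" and m: "m > 0" and ok: "\<forall>p\<in>#M. formula_ok m n d (fst p)"
  shows "\<exists>F. formula_ok m n (Suc d) F \<and> (\<forall>x. eval_formula m x F = system_holds m Q M T x) \<and>
    formula_size F \<le> 1 + m * m * total_size M"
proof -
  obtain Fs where Fs: "mset Fs = gate_inputs m Q M" using ex_mset by blast
  define F where "F = Gate (crt_accept_set m Q T) Fs"
  have sum_Fs: "(\<Sum>F\<leftarrow>Fs. g F) = (\<Sum>p\<in>#M. input_copies m Q (snd p) * g (fst p))" for g :: "formula \<Rightarrow> nat"
    by (metis Fs mset_map sum_mset_gate_inputs sum_mset_sum_list)
  have "eval_formula m x F = system_holds m Q M T x" for x
  proof -
    define L where "L q = (\<Sum>p\<in>#M. nat (snd p q mod int q) * of_bool (eval_formula m x (fst p)))" for q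
    have "(\<Sum>F\<leftarrow>Fs. of_bool (eval_formula m x F)) = (\<Sum>q\<in>Q. (m div q) * L q)"
      unfolding sum_Fs input_copies_def L_def sum_distrib_right sum_mset_distrib_left
      by (induction M) (auto simp: sum.distrib mult.assoc)
    then have "eval_formula m x F \<longleftrightarrow> (\<forall>q\<in>Q. [int (L q) = T q] (mod int q))"
      unfolding F_def using mod_sum_in_crt_accept_set_iff[OF Q m] by simp
    also have "\<dots> \<longleftrightarrow> system_holds m Q M T x"
      unfolding system_holds_def
    proof (intro ball_cong refl)
      fix q assume "q \<in> Q"
      then have "q > 0" using Q prime_gt_0_nat by auto
      then have "int (L q) = (\<Sum>p\<in>#M. (snd p q mod int q) * of_bool (eval_formula m x (fst p)))"
        unfolding L_def of_nat_sum_mset by (simp add: multiset.map_comp o_def)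
      then have "[int (L q) = weighted_count m x M q] (mod int q)"
        unfolding weighted_count_def by (simp add: sum_mset_mod_cong)
      then show "[int (L q) = T q] (mod int q) \<longleftrightarrow> [weighted_count m x M q = T q] (mod int q)"
        by (meson cong_sym cong_trans)
    qed
    finally show ?thesis .
  qed
  moreover have "formula_ok m n (Suc d) F"
  proof -
    have "\<exists>p\<in>#M. fst p = G" if "G \<in> set Fs" for G
    proof -
      have "G \<in># gate_inputs m Q M" using that Fs by (metis set_mset_mset)
      then show ?thesis unfolding gate_inputs_def by (auto split: if_splits)
    qed
    then show ?thesis
      using ok by (fastforce simp: formula_ok_def F_def crt_accept_set_def Max_le_iff)
  qed
  moreover have "formula_size F \<le> 1 + m * m * total_size M"
  proof -
    have "formula_size F = Suc (\<Sum>p\<in>#M. input_copies m Q (snd p) * formula_size (fst p))"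
      unfolding F_def using sum_Fs by simp
    also have "(\<Sum>p\<in>#M. input_copies m Q (snd p) * formula_size (fst p)) \<le>
               (\<Sum>p\<in>#M. m * m * formula_size (fst p))"
      by (intro sum_mset_mono mult_right_mono input_copies_le[OF Q m]) auto
    finally show ?thesis by (simp add: total_size_def sum_mset_distrib_left)
  qed
  ultimately show ?thesis by blast
qed


definition solution_count :: "nat \<Rightarrow> 'a set \<Rightarrow> ('a \<Rightarrow> int) \<Rightarrow> int \<Rightarrow> int" where
  "solution_count q V v t =
    (\<Sum>a\<in>PiE V (\<lambda>_. {..<q}). of_bool ([(\<Sum>j\<in>V. int (a j) * v j) = t] (mod int q)))"

lemma solution_count_cong: "[t = t'] (mod int q) \<Longrightarrow> solution_count q V v t = solution_count q V v t'"
proof -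
  assume "[t = t'] (mod int q)"
  then have "[s = t] (mod int q) \<longleftrightarrow> [s = t'] (mod int q)" for s by (meson cong_sym cong_trans)
  then show ?thesis by (simp add: solution_count_def)
qed

lemma sum_solution_count:
  assumes "finite V" "q > 0"
  shows "(\<Sum>u<q. solution_count q V v (int u)) = int q ^ card V"
proof -
  have "(\<Sum>u<q. solution_count q V v (int u)) = (\<Sum>a\<in>PiE V (\<lambda>_. {..<q}). \<Sum>u<q. of_bool ([(\<Sum>j\<in>V. int (a j) * v j) = int u] (mod int q)))"
    unfolding solution_count_def by (rule sum.swap)
  also have "\<dots> = (\<Sum>a\<in>PiE V (\<lambda>_. {..<q}). 1)"
  proof (intro sum.cong refl)
    fix a
    define s where "s = (\<Sum>j\<in>V. int (a j) * v j)"
    have "(\<Sum>u<q. of_bool ([s = int u] (mod int q)) :: int) = (\<Sum>u\<in>{nat (s mod int q)}. 1)"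
    proof (rule sum.mono_neutral_cong_right)
      show "{nat (s mod int q)} \<subseteq> {..<q}" using assms(2) by (simp add: nat_less_iff)
      show "\<forall>i\<in>{..<q} - {nat (s mod int q)}. of_bool ([s = int i] (mod int q)) = (0::int)"
        using assms(2) by (auto simp: cong_def)
      show "\<And>x. x \<in> {nat (s mod int q)} \<Longrightarrow> of_bool ([s = int x] (mod int q)) = (1::int)"
        using assms(2) by (auto simp: cong_def)
    qed auto
    then show "(\<Sum>u<q. of_bool ([(\<Sum>j\<in>V. int (a j) * v j) = int u] (mod int q)) :: int) = 1"
      unfolding s_def by simp
  qed
  also have "\<dots> = int q ^ card V" using assms by (simp add: card_PiE)
  finally show ?thesis .
qed

lemma sum_PiE_insert:
  assumes "finite V" "j \<notin> V"
  shows "(\<Sum>a\<in>PiE (insert j V) B. g a) = (\<Sum>x\<in>B j. \<Sum>a\<in>PiE V B. g (a(j := x)))"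
proof -
  have "(\<Sum>a\<in>PiE (insert j V) B. g a) = (\<Sum>(x, a)\<in>B j \<times> PiE V B. g (a(j := x)))"
    using assms
    by (intro sum.reindex_bij_witness[of _ "\<lambda>(y,g). g(j := y)" "\<lambda>g. (g j, g(j := undefined))"])
       (auto simp: PiE_def extensional_def)
  also have "\<dots> = (\<Sum>x\<in>B j. \<Sum>a\<in>PiE V B. g (a(j := x)))"
    by (rule sum.cartesian_product[symmetric])
  finally show ?thesis .
qed

lemma solution_count_insert:
  assumes "finite V" "j \<notin> V"
  shows "solution_count q (insert j V) v t = (\<Sum>x<q. solution_count q V v (t - int x * v j))"
proof -
  have "(\<Sum>i\<in>insert j V. int ((a(j := x)) i) * v i) = int x * v j + (\<Sum>i\<in>V. int (a i) * v i)" for a x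
    using assms by (simp add: sum.insert) (intro sum.cong, auto)
  then have "[(\<Sum>i\<in>insert j V. int ((a(j := x)) i) * v i) = t] (mod int q) \<longleftrightarrow>
      [(\<Sum>i\<in>V. int (a i) * v i) = t - int x * v j] (mod int q)" for a x
    by (simp add: cong_iff_dvd_diff algebra_simps)
  then show ?thesis
    unfolding solution_count_def sum_PiE_insert[OF assms] by simp
qed

lemma sum_solution_count_shift:
  assumes "finite V" "prime q" "\<not> int q dvd c"
  shows "(\<Sum>x<q. solution_count q V v (t - int x * c)) = int q ^ card V"
proof -
  have q0: "q > 0" using assms(2) prime_gt_0_nat by blast
  define f where "f x = nat ((t - int x * c) mod int q)" for x
  have "inj_on f {..<q}"
  proof (rule inj_onI)
    fix x y assume xy: "x \<in> {..<q}" "y \<in> {..<q}" "f x = f y"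
    then have "[t - int x * c = t - int y * c] (mod int q)"
      using q0 unfolding f_def cong_def by (metis nat_eq_iff2 pos_mod_sign of_nat_0_less_iff)
    from cong_diff[OF cong_refl[of t] this] have "[int x * c = int y * c] (mod int q)"
      by simp
    moreover have "coprime c (int q)"
      using prime_imp_coprime[of "int q" c] assms(2,3) by (simp add: coprime_commute)
    ultimately have "[x = y] (mod q)" by (simp add: cong_mult_rcancel cong_int_iff)
    then show "x = y" using xy by (simp add: cong_less_modulus_unique_nat)
  qed
  moreover have "f ` {..<q} \<subseteq> {..<q}" using q0 by (auto simp: f_def nat_less_iff)
  ultimately have bij: "bij_betw f {..<q} {..<q}"
    unfolding bij_betw_def using endo_inj_surj[of "{..<q}" f] by auto
  have "(\<Sum>x<q. solution_count q V v (t - int x * c)) = (\<Sum>x<q. solution_count q V v (int (f x)))"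
    by (intro sum.cong refl solution_count_cong) (use q0 in \<open>simp add: f_def cong_def\<close>)
  also have "\<dots> = (\<Sum>u<q. solution_count q V v (int u))"
    using sum.reindex_bij_betw[OF bij, of "\<lambda>u. solution_count q V v (int u)"] by simp
  also have "\<dots> = int q ^ card V" by (rule sum_solution_count[OF assms(1) q0])
  finally show ?thesis .
qed

lemma solution_count_eq:
  assumes "finite V" "prime q"
  shows "solution_count q V v t = (if \<forall>j\<in>V. int q dvd v j
    then (if int q dvd t then int q ^ card V else 0) else int q ^ (card V - 1))"
  using assms(1)
proof (induction V arbitrary: t rule: finite_induct)
  case empty
  have "[0 = t] (mod int q) \<longleftrightarrow> int q dvd t" by (simp add: cong_iff_dvd_diff)
  then show ?case by (simp add: solution_count_def)
next
  case (insert j V)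
  show ?case
  proof (cases "int q dvd v j")
    case True
    then have "[t - int x * v j = t] (mod int q)" for x
      by (simp add: cong_iff_dvd_diff)
    then have "solution_count q V v (t - int x * v j) = solution_count q V v t" for x
      by (rule solution_count_cong)
    then have step: "solution_count q (insert j V) v t = int q * solution_count q V v t"
      unfolding solution_count_insert[OF insert(1,2)] by simp
    show ?thesis
    proof (cases "\<forall>i\<in>V. int q dvd v i")
      case True
      then show ?thesis using step insert.IH \<open>int q dvd v j\<close> insert(1,2) by simp
    next
      case False
      then have "V \<noteq> {}" by auto
      then have "Suc (card V - 1) = card V" using insert(1) by (simp add: Suc_diff_1 card_gt_0_iff)
      then have "int q * int q ^ (card V - 1) = int q ^ card V" by (metis power_Suc)
      moreover have "solution_count q V v t = int q ^ (card V - 1)"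
        by (subst insert.IH) (simp only: if_not_P[OF False])
      moreover have "\<not> (\<forall>i\<in>insert j V. int q dvd v i)" using False by auto
      ultimately show ?thesis
        unfolding step if_not_P[OF \<open>\<not> (\<forall>i\<in>insert j V. int q dvd v i)\<close>] using insert(1,2) by simp
    qed
  next
    case False
    then have "solution_count q (insert j V) v t = int q ^ card V"
      unfolding solution_count_insert[OF insert(1,2)] by (rule sum_solution_count_shift[OF insert(1) assms(2)])
    then show ?thesis using False insert(1,2) by simp
  qed
qed

lemma solution_count_0_minus_1:
  assumes "finite V" "prime q"
  shows "solution_count q V v 0 - solution_count q V v 1 = int q ^ card V * of_bool (\<forall>j\<in>V. int q dvd v j)"
proof -
  have "q \<noteq> 1" using assms(2) by (metis not_prime_1)
  then have "\<not> int q dvd 1" by simp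
  then show ?thesis unfolding solution_count_eq[OF assms] by simp
qed

lemma signed_solution_sum:
  assumes "finite V" "prime q"
  shows "(\<Sum>(a, e)\<in>PiE V (\<lambda>_. {..<q}) \<times> {0, 1}.
      (if e = 0 then 1 else -1) * of_bool ([(\<Sum>j\<in>V. int (a j) * v j) = int e] (mod int q)))
    = int q ^ card V * of_bool (\<forall>j\<in>V. int q dvd v j)"
proof -
  have "(\<Sum>(a, e)\<in>PiE V (\<lambda>_. {..<q}) \<times> {0, 1}.
      (if e = 0 then 1 else -1) * of_bool ([(\<Sum>j\<in>V. int (a j) * v j) = int e] (mod int q)))
    = (\<Sum>a\<in>PiE V (\<lambda>_. {..<q}). of_bool ([(\<Sum>j\<in>V. int (a j) * v j) = 0] (mod int q))
        - of_bool ([(\<Sum>j\<in>V. int (a j) * v j) = 1] (mod int q)) :: int)"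
    unfolding sum.cartesian_product' by (intro sum.cong refl) (simp add: of_bool_def)
  also have "\<dots> = solution_count q V v 0 - solution_count q V v 1"
    unfolding solution_count_def by (rule sum_subtractf)
  finally show ?thesis using solution_count_0_minus_1[OF assms] by simp
qed

text \<open>A choice \<open>\<phi>\<close> assigns to each prime \<open>q\<close> a coefficient vector \<open>a \<in> {..<q}\<^sup>V\<close> and a shift
  \<open>e \<in> {0, 1}\<close>; the combined system takes, modulo each \<open>q\<close>, the \<open>a\<close>-combination of the given systems
  with target shifted by \<open>e\<close>.\<close>

definition choices :: "nat set \<Rightarrow> nat set \<Rightarrow> (nat \<Rightarrow> (nat \<Rightarrow> nat) \<times> nat) set" where
  "choices V P = PiE P (\<lambda>q. PiE V (\<lambda>_. {..<q}) \<times> {0, 1})"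

definition choice_sign :: "nat set \<Rightarrow> (nat \<Rightarrow> (nat \<Rightarrow> nat) \<times> nat) \<Rightarrow> int" where
  "choice_sign P \<phi> = (\<Prod>q\<in>P. if snd (\<phi> q) = 0 then 1 else -1)"

definition combined_system :: "(nat \<Rightarrow> (formula \<times> (nat \<Rightarrow> int)) multiset) \<Rightarrow> nat set \<Rightarrow>
    (nat \<Rightarrow> (nat \<Rightarrow> nat) \<times> nat) \<Rightarrow> (formula \<times> (nat \<Rightarrow> int)) multiset" where
  "combined_system Ms V \<phi> = (\<Sum>j\<in>V. image_mset (\<lambda>p. (fst p, \<lambda>q. int (fst (\<phi> q) j) * snd p q)) (Ms j))"

definition combined_target :: "(nat \<Rightarrow> nat \<Rightarrow> int) \<Rightarrow> nat set \<Rightarrow> (nat \<Rightarrow> (nat \<Rightarrow> nat) \<times> nat) \<Rightarrow> nat \<Rightarrow> int" where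
  "combined_target Ts V \<phi> q = (\<Sum>j\<in>V. int (fst (\<phi> q) j) * Ts j q) + int (snd (\<phi> q))"

lemma weighted_count_add: "weighted_count m x (M + N) q = weighted_count m x M q + weighted_count m x N q"
  by (simp add: weighted_count_def)

lemma weighted_count_sum: "weighted_count m x (\<Sum>j\<in>V. Ms j) q = (\<Sum>j\<in>V. weighted_count m x (Ms j) q)"
  by (induction V rule: infinite_finite_induct) (auto simp: weighted_count_add, simp_all add: weighted_count_def)

lemma weighted_count_single: "weighted_count m x {#(F, w)#} q = w q * of_bool (eval_formula m x F)"
  by (simp add: weighted_count_def)

lemma weighted_count_combined_system:
  "weighted_count m x (combined_system Ms V \<phi>) q = (\<Sum>j\<in>V. int (fst (\<phi> q) j) * weighted_count m x (Ms j) q)"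
proof -
  have "weighted_count m x (image_mset (\<lambda>p. (fst p, \<lambda>q. c q * snd p q)) M) q = c q * weighted_count m x M q"
    for c and M :: "(formula \<times> (nat \<Rightarrow> int)) multiset"
    by (induction M) (auto simp: weighted_count_def algebra_simps)
  then show ?thesis unfolding combined_system_def weighted_count_sum by simp
qed

lemma total_size_add: "total_size (M + N) = total_size M + total_size N"
  by (simp add: total_size_def)

lemma total_size_single: "total_size {#(F, w)#} = formula_size F"
  by (simp add: total_size_def)

lemma total_size_sum: "total_size (\<Sum>j\<in>V. Ms j) = (\<Sum>j\<in>V. total_size (Ms j))"
  by (induction V rule: infinite_finite_induct) (auto simp: total_size_add, simp_all add: total_size_def)

lemma total_size_combined_system:
  "total_size (combined_system Ms V \<phi>) = (\<Sum>j\<in>V. total_size (Ms j))"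
  unfolding combined_system_def total_size_sum by (simp add: total_size_def multiset.map_comp o_def)

lemma mem_sum_mset: "p \<in># (\<Sum>j\<in>V. Ms j) \<Longrightarrow> \<exists>j\<in>V. p \<in># Ms j"
  by (induction V rule: infinite_finite_induct) (auto simp: sum.insert)

lemma mem_combined_system: "p \<in># combined_system Ms V \<phi> \<Longrightarrow> \<exists>j\<in>V. \<exists>p'\<in># Ms j. fst p = fst p'"
  unfolding combined_system_def by (force dest: mem_sum_mset)

lemma of_bool_Ball_eq_prod: "finite A \<Longrightarrow> (of_bool (\<forall>a\<in>A. P a) :: int) = (\<Prod>a\<in>A. of_bool (P a))"
  by (induction A rule: finite_induct) auto

lemma card_choices:
  assumes "finite V" "finite P"
  shows "card (choices V P) = (\<Prod>q\<in>P. q ^ card V * 2)"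
  unfolding choices_def using assms by (simp add: card_PiE card_cartesian_product mult_2_right)

text \<open>Multiplying out \<^term>\<open>signed_solution_sum\<close> over all primes \<open>q \<in> P\<close> turns a conjunction of
  systems into a signed sum of single systems.\<close>

lemma conj_systems_eq_signed_sum:
  assumes V: "finite V" and P: "finite P" "\<forall>q\<in>P. prime q"
  shows "(\<Prod>q\<in>P. int q ^ card V) * of_bool (\<forall>j\<in>V. system_holds m P (Ms j) (Ts j) x)
    = (\<Sum>\<phi>\<in>choices V P. choice_sign P \<phi> *
        of_bool (system_holds m P (combined_system Ms V \<phi>) (combined_target Ts V \<phi>) x))"
proof -
  define v where "v q j = weighted_count m x (Ms j) q - Ts j q" for q j
  define g where "g q = (\<lambda>(a, e). (if e = 0 then 1 else -1) *
      (of_bool ([(\<Sum>j\<in>V. int (a j) * v q j) = int e] (mod int q)) :: int))" for q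
  have "(\<forall>j\<in>V. system_holds m P (Ms j) (Ts j) x) \<longleftrightarrow> (\<forall>q\<in>P. \<forall>j\<in>V. int q dvd v q j)"
    unfolding system_holds_def v_def cong_iff_dvd_diff by auto
  then have lhs: "of_bool (\<forall>j\<in>V. system_holds m P (Ms j) (Ts j) x) =
      (\<Prod>q\<in>P. (of_bool (\<forall>j\<in>V. int q dvd v q j) :: int))"
    using of_bool_Ball_eq_prod[OF P(1)] by simp
  have "choice_sign P \<phi> * of_bool (system_holds m P (combined_system Ms V \<phi>) (combined_target Ts V \<phi>) x)
      = (\<Prod>q\<in>P. g q (\<phi> q))" for \<phi>
  proof -
    have "weighted_count m x (combined_system Ms V \<phi>) q - combined_target Ts V \<phi> q
        = (\<Sum>j\<in>V. int (fst (\<phi> q) j) * v q j) - int (snd (\<phi> q))" for q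
      unfolding weighted_count_combined_system combined_target_def v_def
      by (simp add: algebra_simps sum_subtractf)
    then have "system_holds m P (combined_system Ms V \<phi>) (combined_target Ts V \<phi>) x \<longleftrightarrow>
        (\<forall>q\<in>P. [(\<Sum>j\<in>V. int (fst (\<phi> q) j) * v q j) = int (snd (\<phi> q))] (mod int q))"
      unfolding system_holds_def cong_iff_dvd_diff by simp
    then show ?thesis
      unfolding choice_sign_def g_def using of_bool_Ball_eq_prod[OF P(1)]
      by (simp add: prod.distrib split_beta)
  qed
  then have "(\<Sum>\<phi>\<in>choices V P. choice_sign P \<phi> *
        of_bool (system_holds m P (combined_system Ms V \<phi>) (combined_target Ts V \<phi>) x))
      = (\<Sum>\<phi>\<in>choices V P. \<Prod>q\<in>P. g q (\<phi> q))"
    by simp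
  also have "\<dots> = (\<Prod>q\<in>P. \<Sum>ae\<in>PiE V (\<lambda>_. {..<q}) \<times> {0, 1}. g q ae)"
    unfolding choices_def using P V
    by (intro prod_sum_PiE[symmetric]) (auto intro!: finite_PiE finite_cartesian_product)
  also have "\<dots> = (\<Prod>q\<in>P. int q ^ card V * of_bool (\<forall>j\<in>V. int q dvd v q j))"
    unfolding g_def using P V by (intro prod.cong refl signed_solution_sum) auto
  finally show ?thesis
    unfolding lhs by (simp add: prod.distrib)
qed


lemma prime_power_dvd_choose:
  assumes p: "prime (p::nat)" and i: "0 < i" "i < p ^ e"
  shows "p dvd (p ^ e choose i)"
proof (rule ccontr)
  assume nd: "\<not> p dvd (p ^ e choose i)"
  have pe0: "p ^ e > 0" using p by (simp add: prime_gt_0_nat)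
  have "Suc (p ^ e - 1) * ((p ^ e - 1) choose (i - 1)) = (Suc (p ^ e - 1) choose Suc (i - 1)) * Suc (i - 1)"
    by (rule Suc_times_binomial_eq)
  moreover have "Suc (p ^ e - 1) = p ^ e" using pe0 by simp
  moreover have "Suc (i - 1) = i" using i by simp
  ultimately have eq: "p ^ e * ((p ^ e - 1) choose (i - 1)) = (p ^ e choose i) * i"
    by metis
  have "coprime (p ^ e) (p ^ e choose i)"
    using nd p by (simp add: coprime_power_left_iff prime_imp_coprime)
  moreover have "p ^ e dvd (p ^ e choose i) * i" using eq by (metis dvd_triv_left)
  ultimately have "p ^ e dvd i" by (meson coprime_dvd_mult_right_iff)
  then show False using i by (meson nat_dvd_not_less)
qed

lemma choose_add_prime_power_cong:
  assumes p: "prime (p::nat)" and k: "k < p ^ e"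
  shows "[(t + p ^ e) choose k = t choose k] (mod p)"
proof -
  have "(t + p ^ e) choose k = (\<Sum>i\<le>k. (p ^ e choose i) * (t choose (k - i)))"
    using vandermonde[of "p ^ e" t k] by (simp add: add.commute)
  also have "\<dots> = (p ^ e choose 0) * (t choose (k - 0)) + (\<Sum>i\<in>{1..k}. (p ^ e choose i) * (t choose (k - i)))"
  proof -
    have "{..k} = insert 0 {1..k}" by auto
    then show ?thesis by (simp add: sum.insert)
  qed
  also have "\<dots> = (t choose k) + (\<Sum>i\<in>{1..k}. (p ^ e choose i) * (t choose (k - i)))" by simp
  finally have e: "(t + p ^ e) choose k = (t choose k) + (\<Sum>i\<in>{1..k}. (p ^ e choose i) * (t choose (k - i)))" .
  have "p dvd (\<Sum>i\<in>{1..k}. (p ^ e choose i) * (t choose (k - i)))"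
    by (intro dvd_sum dvd_mult2 prime_power_dvd_choose[OF p]) (use k in auto)
  then obtain c where "(\<Sum>i\<in>{1..k}. (p ^ e choose i) * (t choose (k - i))) = p * c" by blast
  then show ?thesis unfolding e by (simp add: cong_def)
qed

lemma choose_mod_prime_power_cong:
  assumes p: "prime (p::nat)" and k: "k < p ^ e"
  shows "[t choose k = (t mod p ^ e) choose k] (mod p)"
proof (induction t rule: less_induct)
  case (less t)
  show ?case
  proof (cases "t < p ^ e")
    case True then show ?thesis by simp
  next
    case False
    define t' where "t' = t - p ^ e"
    have t: "t = t' + p ^ e" using False t'_def by simp
    have pe0: "p ^ e > 0" using p by (simp add: prime_gt_0_nat)
    have "[t choose k = t' choose k] (mod p)" unfolding t by (rule choose_add_prime_power_cong[OF p k])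
    moreover have "[t' choose k = (t' mod p ^ e) choose k] (mod p)" using less[of t'] t pe0 by simp
    moreover have "t' mod p ^ e = t mod p ^ e" using t by simp
    ultimately show ?thesis by (metis cong_trans)
  qed
qed

lemma binomial_inversion:
  "(\<Sum>k\<le>u. (-1) ^ (k - u0) * int (k choose u0) * int (u choose k)) = of_bool (u = u0)"
proof (cases "u0 \<le> u")
  case False
  then show ?thesis by (intro trans[OF sum.neutral]) auto
next
  case True
  define d where "d = u - u0"
  have "(\<Sum>k\<le>u. (-1) ^ (k - u0) * int (k choose u0) * int (u choose k)) =
        (\<Sum>k\<in>{u0..u}. (-1) ^ (k - u0) * int (k choose u0) * int (u choose k))"
    by (rule sum.mono_neutral_right) auto
  also have "\<dots> = (\<Sum>k\<in>{u0..u}. (-1) ^ (k - u0) * int (u choose u0) * int ((u - u0) choose (k - u0)))"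
  proof (intro sum.cong refl)
    fix k assume "k \<in> {u0..u}"
    then have "(u choose k) * (k choose u0) = (u choose u0) * ((u - u0) choose (k - u0))"
      by (intro choose_mult) auto
    then show "(-1) ^ (k - u0) * int (k choose u0) * int (u choose k) = (-1) ^ (k - u0) * int (u choose u0) * int ((u - u0) choose (k - u0))"
      by (metis (no_types, lifting) mult.assoc mult.commute of_nat_mult)
  qed
  also have "\<dots> = (\<Sum>i\<in>{0..d}. (-1) ^ i * int (u choose u0) * int (d choose i))"
    using sum.shift_bounds_cl_nat_ivl[of "\<lambda>k. (-1) ^ (k - u0) * int (u choose u0) * int ((u - u0) choose (k - u0))" 0 u0 d]
    unfolding d_def using True by simp
  also have "\<dots> = int (u choose u0) * (\<Sum>i\<le>d. (-1) ^ i * int (d choose i))"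
    by (simp add: sum_distrib_left atLeast0AtMost algebra_simps)
  also have "\<dots> = of_bool (u = u0)"
  proof (cases "d = 0")
    case True then show ?thesis using \<open>u0 \<le> u\<close> by (simp add: d_def)
  next
    case False
    then have "(\<Sum>i\<le>d. (-1) ^ i * int (d choose i)) = 0" by (intro choose_alternating_sum) simp
    then show ?thesis using False by (simp add: d_def)
  qed
  finally show ?thesis .
qed


text \<open>Modulo a prime \<open>p\<close>, \<open>t choose k\<close> for \<open>k < p ^ e\<close> depends only on \<open>t mod p ^ e\<close> (a weak form of
  Lucas' theorem); binomial inversion then recovers the indicator of \<open>t mod p ^ e = u\<close>.\<close>

definition inversion_coeff :: "nat \<Rightarrow> nat \<Rightarrow> int" where
  "inversion_coeff u0 k = (-1) ^ (k - u0) * int (k choose u0)"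

lemma inversion_sum_cong:
  assumes p: "prime (p::nat)"
  shows "[(\<Sum>k<p ^ e. inversion_coeff u0 k * int (t choose k)) = of_bool (t mod p ^ e = u0)] (mod int p)"
proof -
  define u where "u = t mod p ^ e"
  have u: "u < p ^ e" using p by (simp add: u_def prime_gt_0_nat)
  have "[(\<Sum>k<p ^ e. inversion_coeff u0 k * int (t choose k)) = (\<Sum>k<p ^ e. inversion_coeff u0 k * int (u choose k))] (mod int p)"
  proof (intro cong_sum cong_mult cong_refl)
    fix k assume "k \<in> {..<p ^ e}"
    then show "[int (t choose k) = int (u choose k)] (mod int p)"
      unfolding u_def using choose_mod_prime_power_cong[OF p, of k e t] by (simp add: cong_int_iff)
  qed
  also have "(\<Sum>k<p ^ e. inversion_coeff u0 k * int (u choose k)) = (\<Sum>k\<le>u. inversion_coeff u0 k * int (u choose k))"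
    by (rule sum.mono_neutral_right) (use u in auto)
  also have "\<dots> = of_bool (u = u0)" unfolding inversion_coeff_def using binomial_inversion[where u=u and u0=u0] by simp
  finally show ?thesis unfolding u_def .
qed

lemma sum_card_subsets:
  assumes "finite Y"
  shows "(\<Sum>V\<in>{V. V \<subseteq> Y \<and> card V < M}. g (card V)) = (\<Sum>k<M. int (card Y choose k) * g k)"
proof (induction M)
  case 0 then show ?case by simp
next
  case (Suc M)
  have split: "{V. V \<subseteq> Y \<and> card V < Suc M} = {V. V \<subseteq> Y \<and> card V < M} \<union> {V. V \<subseteq> Y \<and> card V = M}" by auto
  have fin: "finite {V. V \<subseteq> Y \<and> card V < M}" "finite {V. V \<subseteq> Y \<and> card V = M}"
    using assms by (auto intro: finite_subset[of _ "Pow Y"])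
  have "(\<Sum>V\<in>{V. V \<subseteq> Y \<and> card V < Suc M}. g (card V)) =
      (\<Sum>V\<in>{V. V \<subseteq> Y \<and> card V < M}. g (card V)) + (\<Sum>V\<in>{V. V \<subseteq> Y \<and> card V = M}. g (card V))"
    unfolding split by (rule sum.union_disjoint) (use fin in auto)
  also have "(\<Sum>V\<in>{V. V \<subseteq> Y \<and> card V = M}. g (card V)) = int (card Y choose M) * g M"
    using n_subsets[OF assms, of M] by simp
  finally show ?case using Suc by simp
qed

lemma card_detector_cong:
  assumes q: "prime q" and U: "finite U" "Y \<subseteq> U"
  shows "[(\<Sum>V\<in>{V. V \<subseteq> U \<and> card V < q ^ e}. inversion_coeff u (card V) * of_bool (V \<subseteq> Y))
    = of_bool (card Y mod q ^ e = u)] (mod int q)"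
proof -
  have "finite {V. V \<subseteq> U \<and> card V < q ^ e}" using U(1) by (auto intro: finite_subset[of _ "Pow U"])
  then have "(\<Sum>V\<in>{V. V \<subseteq> U \<and> card V < q ^ e}. inversion_coeff u (card V) * of_bool (V \<subseteq> Y))
      = (\<Sum>V\<in>{V. V \<subseteq> Y \<and> card V < q ^ e}. inversion_coeff u (card V))"
    using U(2) by (intro sum.mono_neutral_cong_right) auto
  also have "\<dots> = (\<Sum>k<q ^ e. inversion_coeff u k * int (card Y choose k))"
    using U finite_subset by (subst sum_card_subsets) (auto simp: mult.commute)
  finally show ?thesis using inversion_sum_cong[OF q] by simp
qed


lemma partition_into_blocks:
  fixes S :: "nat set"
  assumes "finite S" "card S \<le> N * B"
  obtains Sb where "\<forall>j<B. Sb j \<subseteq> S \<and> card (Sb j) \<le> N" "\<forall>i\<in>S. \<exists>j<B. i \<in> Sb j"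
proof -
  define xs where "xs = sorted_list_of_set S"
  have sxs: "set xs = S" "length xs = card S" using assms(1) by (auto simp: xs_def)
  define Sb where "Sb j = set (take N (drop (j * N) xs))" for j
  have "Sb j \<subseteq> S" for j unfolding Sb_def using sxs by (meson in_set_dropD in_set_takeD subsetI)
  moreover have "card (Sb j) \<le> N" for j unfolding Sb_def
    by (rule order_trans[OF card_length]) simp
  moreover have "\<exists>j<B. i \<in> Sb j" if "i \<in> S" for i
  proof -
    have "i \<in> set xs" using that sxs by simp
    then obtain a where a: "a < length xs" "xs ! a = i" by (auto simp: in_set_conv_nth)
    have N0: "N > 0" using that assms by (cases N) (auto simp: card_gt_0_iff)
    define j where "j = a div N"
    have "a < N * B" using a sxs assms(2) by simp
    then have "j < B" unfolding j_def using N0 by (simp add: div_less_iff_less_mult mult.commute)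
    moreover have "a - j * N = a mod N" "j * N \<le> a"
      unfolding j_def by (simp_all add: minus_div_mult_eq_mod)
    then have "a - j * N < N" "j * N \<le> a" using N0 by simp_all
    then have "take N (drop (j * N) xs) ! (a - j * N) = xs ! a" "a - j * N < length (take N (drop (j * N) xs))"
      using a by auto
    then have "xs ! a \<in> Sb j" unfolding Sb_def by (metis nth_mem)
    ultimately show ?thesis using a by blast
  qed
  ultimately show ?thesis using that by blast
qed

lemma exists_prime_power_between:
  assumes "prime (q::nat)" "D \<ge> 1"
  obtains e where "D < q ^ e" "q ^ e \<le> q * D"
proof -
  have "D < 2 ^ D" by (rule less_exp)
  also have "\<dots> \<le> q ^ D" using prime_ge_2_nat[OF assms(1)] by (simp add: power_mono)
  finally have ex: "\<exists>e. D < q ^ e" by blast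
  define e where "e = (LEAST e. D < q ^ e)"
  have e: "D < q ^ e" unfolding e_def using ex by (rule LeastI_ex)
  have "e \<noteq> 0" using e assms(2) by (intro notI) simp
  then have "\<not> D < q ^ (e - 1)" unfolding e_def by (intro not_less_Least) (simp add: e_def[symmetric])
  then have "q ^ e \<le> q * D" using \<open>e \<noteq> 0\<close> by (cases e) auto
  with e show ?thesis using that by blast
qed

lemma eq_of_cong_prime_powers:
  fixes t B :: nat
  assumes "finite Q" "\<forall>q\<in>Q. prime q" "t \<le> B" "B < (\<Prod>q\<in>Q. q ^ E q)" "\<forall>q\<in>Q. [t = B] (mod q ^ E q)"
  shows "t = B"
proof -
  have "[t = B] (mod (\<Prod>q\<in>Q. q ^ E q))"
    using assms(2,5) by (intro coprime_cong_prod_nat) (auto simp: primes_coprime)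
  then show ?thesis using assms(3,4) by (simp add: cong_less_modulus_unique_nat)
qed

lemma fermat_inverse_cong:
  fixes K q :: nat
  assumes "prime q" "\<not> q dvd K"
  shows "[int K ^ (q - 2) * int K = 1] (mod int q)"
proof -
  have "Suc (q - 2) = q - 1" using prime_ge_2_nat[OF assms(1)] by simp
  then have "K ^ (q - 2) * K = K ^ (q - 1)" by (metis power_Suc2)
  then have "[K ^ (q - 2) * K = 1] (mod q)" using fermat_theorem[OF assms] by simp
  then show ?thesis by (metis cong_int_iff of_nat_1 of_nat_mult of_nat_power)
qed

lemma card_small_subsets_le:
  fixes B M :: nat
  assumes "B \<ge> 1"
  shows "card {V. V \<subseteq> {..<B} \<and> card V < M} \<le> M * B ^ M"
proof -
  have "int (card {V. V \<subseteq> {..<B} \<and> card V < M}) = (\<Sum>V\<in>{V. V \<subseteq> {..<B} \<and> card V < M}. (\<lambda>k. 1::int) (card V))"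
    by simp
  also have "\<dots> = (\<Sum>k<M. int (B choose k))"
    by (subst sum_card_subsets) simp_all
  also have "\<dots> \<le> (\<Sum>k<M. int (B ^ M))"
  proof (intro sum_mono)
    fix k assume k: "k \<in> {..<M}"
    have "B choose k \<le> B ^ k"
      by (cases "k \<le> B") (auto simp: binomial_le_pow binomial_eq_0)
    also have "\<dots> \<le> B ^ M" using k assms by (intro power_increasing) auto
    finally show "int (B choose k) \<le> int (B ^ M)" by simp
  qed
  also have "\<dots> = int (M * B ^ M)" by simp
  finally show ?thesis by linarith
qed

lemma card_choices_le:
  assumes "finite V" "P \<subseteq> prime_factors m" "m > 0" "card V \<le> K"
  shows "card (choices V P) \<le> (2 * m) ^ ((K + 1) * m)"
proof -
  have "finite P" using assms(2) finite_subset by blast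
  then have "card (choices V P) = (\<Prod>q\<in>P. q ^ card V * 2)" by (rule card_choices[OF assms(1)])
  also have "\<dots> \<le> (\<Prod>q\<in>P. (2 * m) ^ (K + 1))"
  proof (intro prod_mono conjI)
    fix q assume "q \<in> P"
    then have "q \<le> m" using assms(2,3) by (auto intro: dvd_imp_le)
    then have "q ^ card V * 2 \<le> (2 * m) ^ card V * (2 * m)"
      using assms(3) by (intro mult_mono power_mono) auto
    also have "\<dots> \<le> (2 * m) ^ K * (2 * m)"
      using assms(3,4) by (intro mult_right_mono power_increasing) auto
    finally show "q ^ card V * 2 \<le> (2 * m) ^ (K + 1)" by (simp add: ac_simps)
  qed auto
  also have "\<dots> = (2 * m) ^ ((K + 1) * card P)" by (simp only: prod_constant power_mult)
  also have "\<dots> \<le> (2 * m) ^ ((K + 1) * m)"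
  proof -
    have "card P \<le> card (prime_factors m)" using assms(2) by (intro card_mono) auto
    then have "card P \<le> m" using card_prime_factors_le[OF assms(3)] by simp
    then have "(K + 1) * card P \<le> (K + 1) * m" by (rule mult_left_mono) simp
    then show ?thesis using assms(3) by (intro power_increasing) auto
  qed
  finally show ?thesis .
qed

lemma sum_mset_sum: "(\<Sum>p\<in>#(\<Sum>i\<in>I. Ms i). g p) = (\<Sum>i\<in>I. \<Sum>p\<in>#Ms i. g p)"
  by (induction I rule: infinite_finite_induct) auto


lemma prime_not_dvd_prod_other_primes:
  assumes "prime q" "finite P" "\<forall>q'\<in>P. prime q'" "q \<notin> P"
  shows "\<not> q dvd (\<Prod>q'\<in>P. q' ^ k)"
proof
  assume "q dvd (\<Prod>q'\<in>P. q' ^ k)"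
  then obtain q' where "q' \<in> P" "q dvd q' ^ k"
    using assms(1,2) by (metis prime_dvd_prod_iff)
  then have "q dvd q'" using assms(1) prime_dvd_power by blast
  then show False
    using assms \<open>q' \<in> P\<close> by (metis primes_dvd_imp_eq)
qed

text \<open>The factor \<open>K ^ (q - 2)\<close> inverts \<open>K\<close> modulo \<open>q\<close>.\<close>

lemma block_detector_cong:
  assumes q: "prime q" and P: "finite P" "\<forall>q'\<in>P. prime q'" "q \<notin> P" and U: "finite U"
  shows "[(\<Sum>V\<in>{V. V \<subseteq> U \<and> card V < q ^ e}. \<Sum>\<phi>\<in>choices V P.
      inversion_coeff u (card V) * int (\<Prod>q'\<in>P. q' ^ card V) ^ (q - 2) * choice_sign P \<phi> *
      of_bool (system_holds m P (combined_system Ms V \<phi>) (combined_target Ts V \<phi>) x))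
    = of_bool (card {j\<in>U. system_holds m P (Ms j) (Ts j) x} mod q ^ e = u)] (mod int q)"
proof -
  define Y where "Y = {j\<in>U. system_holds m P (Ms j) (Ts j) x}"
  define K where "K V = (\<Prod>q'\<in>P. q' ^ card V)" for V :: "nat set"
  have "[(\<Sum>\<phi>\<in>choices V P. inversion_coeff u (card V) * int (K V) ^ (q - 2) * choice_sign P \<phi> *
      of_bool (system_holds m P (combined_system Ms V \<phi>) (combined_target Ts V \<phi>) x))
    = inversion_coeff u (card V) * of_bool (V \<subseteq> Y)] (mod int q)"
    if V: "V \<in> {V. V \<subseteq> U \<and> card V < q ^ e}" for V
  proof -
    have "finite V" using V U finite_subset by blast
    have "(\<Sum>\<phi>\<in>choices V P. inversion_coeff u (card V) * int (K V) ^ (q - 2) * choice_sign P \<phi> *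
        of_bool (system_holds m P (combined_system Ms V \<phi>) (combined_target Ts V \<phi>) x))
      = inversion_coeff u (card V) * int (K V) ^ (q - 2) * (\<Sum>\<phi>\<in>choices V P. choice_sign P \<phi> *
        of_bool (system_holds m P (combined_system Ms V \<phi>) (combined_target Ts V \<phi>) x))"
      by (simp add: sum_distrib_left mult.assoc)
    also have "\<dots> = inversion_coeff u (card V) * int (K V) ^ (q - 2) *
        (int (K V) * of_bool (\<forall>j\<in>V. system_holds m P (Ms j) (Ts j) x))"
      unfolding conj_systems_eq_signed_sum[OF \<open>finite V\<close> P(1,2), symmetric] by (simp add: K_def)
    also have "\<dots> = inversion_coeff u (card V) * (int (K V) ^ (q - 2) * int (K V)) *
        of_bool (\<forall>j\<in>V. system_holds m P (Ms j) (Ts j) x)"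
      by (simp only: mult.assoc)
    also have "(\<forall>j\<in>V. system_holds m P (Ms j) (Ts j) x) \<longleftrightarrow> V \<subseteq> Y"
      using V by (auto simp: Y_def)
    finally have sum_eq: "(\<Sum>\<phi>\<in>choices V P. inversion_coeff u (card V) * int (K V) ^ (q - 2) * choice_sign P \<phi> *
        of_bool (system_holds m P (combined_system Ms V \<phi>) (combined_target Ts V \<phi>) x))
      = inversion_coeff u (card V) * (int (K V) ^ (q - 2) * int (K V)) * of_bool (V \<subseteq> Y)" .
    have "[int (K V) ^ (q - 2) * int (K V) = 1] (mod int q)"
      unfolding K_def by (rule fermat_inverse_cong[OF q prime_not_dvd_prod_other_primes[OF q P]])
    then have "[inversion_coeff u (card V) * (int (K V) ^ (q - 2) * int (K V)) * of_bool (V \<subseteq> Y)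
        = inversion_coeff u (card V) * 1 * of_bool (V \<subseteq> Y)] (mod int q)"
      by (intro cong_mult cong_refl)
    then show ?thesis unfolding sum_eq by simp
  qed
  then have "[(\<Sum>V\<in>{V. V \<subseteq> U \<and> card V < q ^ e}. \<Sum>\<phi>\<in>choices V P.
      inversion_coeff u (card V) * int (K V) ^ (q - 2) * choice_sign P \<phi> *
      of_bool (system_holds m P (combined_system Ms V \<phi>) (combined_target Ts V \<phi>) x))
    = (\<Sum>V\<in>{V. V \<subseteq> U \<and> card V < q ^ e}. inversion_coeff u (card V) * of_bool (V \<subseteq> Y))] (mod int q)"
    by (rule cong_sum)
  moreover have "[(\<Sum>V\<in>{V. V \<subseteq> U \<and> card V < q ^ e}. inversion_coeff u (card V) * of_bool (V \<subseteq> Y))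
      = of_bool (card Y mod q ^ e = u)] (mod int q)"
    by (rule card_detector_cong[OF q U]) (auto simp: Y_def)
  ultimately show ?thesis unfolding Y_def K_def by (rule cong_trans)
qed


definition and_system :: "nat \<Rightarrow> nat \<Rightarrow> nat \<Rightarrow> nat \<Rightarrow> nat set \<Rightarrow> nat set \<Rightarrow> bool" where
  "and_system m n d s P S \<longleftrightarrow> (\<exists>M T. (\<forall>p\<in>#M. formula_ok m n d (fst p)) \<and> total_size M \<le> s \<and>
     (\<forall>x. system_holds m P M T x \<longleftrightarrow> (\<forall>i\<in>S. x i)))"

lemma and_system_mono:
  assumes "and_system m n d s P S" "s \<le> s'"
  shows "and_system m n d s' P S"
proof -
  obtain M T where "\<forall>p\<in>#M. formula_ok m n d (fst p)" "total_size M \<le> s"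
      "\<forall>x. system_holds m P M T x \<longleftrightarrow> (\<forall>i\<in>S. x i)"
    using assms(1) unfolding and_system_def by blast
  then show ?thesis
    using assms(2) unfolding and_system_def by (intro exI[of _ M] exI[of _ T]) auto
qed

lemma combined_system_gates:
  assumes m: "m > 0" and P: "P \<subseteq> prime_factors m"
    and Ms: "\<And>j. j \<in> U \<Longrightarrow> (\<forall>p\<in>#Ms j. formula_ok m n d (fst p)) \<and> total_size (Ms j) \<le> s"
  obtains Fz where "\<And>V \<phi>. V \<subseteq> U \<Longrightarrow> finite V \<Longrightarrow> card V \<le> K \<Longrightarrow> formula_ok m n (Suc d) (Fz V \<phi>) \<and>
    (\<forall>x. eval_formula m x (Fz V \<phi>) = system_holds m P (combined_system Ms V \<phi>) (combined_target Ts V \<phi>) x) \<and>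
    formula_size (Fz V \<phi>) \<le> 1 + m * m * (K * s)"
proof -
  have "\<exists>F. formula_ok m n (Suc d) F \<and>
    (\<forall>x. eval_formula m x F = system_holds m P (combined_system Ms V \<phi>) (combined_target Ts V \<phi>) x) \<and>
    formula_size F \<le> 1 + m * m * (K * s)" if V: "V \<subseteq> U" "finite V" "card V \<le> K" for V \<phi>
  proof -
    have "\<forall>p\<in>#combined_system Ms V \<phi>. formula_ok m n d (fst p)"
      using V Ms by (fastforce dest: mem_combined_system)
    from system_gate[OF P m this] obtain F where F: "formula_ok m n (Suc d) F"
      "\<forall>x. eval_formula m x F = system_holds m P (combined_system Ms V \<phi>) (combined_target Ts V \<phi>) x"
      "formula_size F \<le> 1 + m * m * total_size (combined_system Ms V \<phi>)"
      by blast
    have "total_size (combined_system Ms V \<phi>) \<le> card V * s"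
      unfolding total_size_combined_system using V Ms sum_bounded_above[of V "\<lambda>j. total_size (Ms j)" s]
      by (simp add: subset_iff)
    also have "\<dots> \<le> K * s" using V(3) by simp
    finally have "formula_size F \<le> 1 + m * m * (K * s)"
      using F(3) by (meson add_left_mono le_trans mult_le_mono2)
    with F(1,2) show ?thesis by blast
  qed
  then show ?thesis using that by metis
qed

lemma mod_prime_detector:
  fixes U :: "nat set"
  assumes m: "m > 0" and q: "q \<in> prime_factors m" and U: "finite U" and K: "q ^ e \<le> K"
    and blocks: "\<forall>j\<in>U. and_system m n d s (prime_factors m - {q}) (Sb j)"
  shows "\<exists>N :: (formula \<times> int) multiset. (\<forall>p\<in>#N. formula_ok m n (Suc d) (fst p)) \<and>
    total_size N \<le> card {V. V \<subseteq> U \<and> card V < q ^ e} * (2 * m) ^ ((K + 1) * m) * (1 + m * m * (K * s)) \<and>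
    (\<forall>x. [(\<Sum>p\<in>#N. snd p * of_bool (eval_formula m x (fst p)))
       = of_bool (card {j\<in>U. \<forall>i\<in>Sb j. x i} mod q ^ e = u)] (mod int q))"
proof -
  define P where "P = prime_factors m - {q}"
  define Vs where "Vs = {V. V \<subseteq> U \<and> card V < q ^ e}"
  have P: "finite P" "\<forall>q'\<in>P. prime q'" "q \<notin> P" "P \<subseteq> prime_factors m" by (auto simp: P_def)
  have "\<forall>j\<in>U. \<exists>MT. (\<forall>p\<in>#fst MT. formula_ok m n d (fst p)) \<and> total_size (fst MT) \<le> s \<and>
      (\<forall>x. system_holds m P (fst MT) (snd MT) x \<longleftrightarrow> (\<forall>i\<in>Sb j. x i))"
    using blocks unfolding and_system_def P_def by force
  then obtain MT where MT: "\<And>j. j \<in> U \<Longrightarrow> (\<forall>p\<in>#fst (MT j). formula_ok m n d (fst p)) \<and>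
      total_size (fst (MT j)) \<le> s \<and> (\<forall>x. system_holds m P (fst (MT j)) (snd (MT j)) x \<longleftrightarrow> (\<forall>i\<in>Sb j. x i))"
    by metis
  define Ms where "Ms j = fst (MT j)" for j
  define Ts where "Ts j = snd (MT j)" for j
  obtain Fz where Fz: "\<And>V \<phi>. V \<subseteq> U \<Longrightarrow> finite V \<Longrightarrow> card V \<le> K \<Longrightarrow> formula_ok m n (Suc d) (Fz V \<phi>) \<and>
      (\<forall>x. eval_formula m x (Fz V \<phi>) = system_holds m P (combined_system Ms V \<phi>) (combined_target Ts V \<phi>) x) \<and>
      formula_size (Fz V \<phi>) \<le> 1 + m * m * (K * s)"
    using combined_system_gates[OF m P(4), of U Ms n d s] MT unfolding Ms_def by blast
  have Vs: "V \<subseteq> U" "finite V" "card V \<le> K" if "V \<in> Vs" for V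
    using that U K finite_subset by (auto simp: Vs_def)
  define coeff where "coeff V \<phi> = inversion_coeff u (card V) * int (\<Prod>q'\<in>P. q' ^ card V) ^ (q - 2) *
      choice_sign P \<phi>" for V :: "nat set" and \<phi>
  define N where "N = (\<Sum>V\<in>Vs. \<Sum>\<phi>\<in>choices V P. {#(Fz V \<phi>, coeff V \<phi>)#})"
  have "\<forall>p\<in>#N. formula_ok m n (Suc d) (fst p)"
    using Fz Vs by (fastforce simp: N_def dest!: mem_sum_mset)
  moreover have "total_size N \<le> card Vs * (2 * m) ^ ((K + 1) * m) * (1 + m * m * (K * s))"
  proof -
    have "total_size N \<le> (\<Sum>V\<in>Vs. card (choices V P) * (1 + m * m * (K * s)))"
      unfolding N_def total_size_sum total_size_single
      using Fz Vs sum_bounded_above[of "choices V P" "\<lambda>\<phi>. formula_size (Fz V \<phi>)" "1 + m * m * (K * s)" for V]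
      by (intro sum_mono) simp
    also have "\<dots> \<le> (\<Sum>V\<in>Vs. (2 * m) ^ ((K + 1) * m) * (1 + m * m * (K * s)))"
      using U K by (intro sum_mono mult_right_mono card_choices_le[OF _ P(4) m])
        (auto simp: Vs_def intro: finite_subset)
    finally show ?thesis by (simp only: sum_constant of_nat_id mult.assoc)
  qed
  moreover have "[(\<Sum>p\<in>#N. snd p * of_bool (eval_formula m x (fst p)))
       = of_bool (card {j\<in>U. \<forall>i\<in>Sb j. x i} mod q ^ e = u)] (mod int q)" for x
  proof -
    have "(\<Sum>p\<in>#N. snd p * of_bool (eval_formula m x (fst p))) = (\<Sum>V\<in>Vs. \<Sum>\<phi>\<in>choices V P.
        coeff V \<phi> * of_bool (system_holds m P (combined_system Ms V \<phi>) (combined_target Ts V \<phi>) x))"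
      unfolding N_def sum_mset_sum using Fz Vs by simp
    moreover have "{j\<in>U. system_holds m P (Ms j) (Ts j) x} = {j\<in>U. \<forall>i\<in>Sb j. x i}"
      using MT by (auto simp: Ms_def Ts_def)
    moreover have "prime q" using q by auto
    ultimately show ?thesis
      using block_detector_cong[OF _ P(1-3) U, where e=e and u=u and m=m and Ms=Ms and Ts=Ts and x=x]
      unfolding coeff_def Vs_def by simp
  qed
  ultimately show ?thesis unfolding Vs_def by blast
qed

definition blowup :: "nat \<Rightarrow> nat \<Rightarrow> nat" where
  "blowup m D = (2 * m * D) ^ (2 * m * (2 * m * D) + m + 5)"

lemma blowup_bound:
  fixes m D B c s :: nat
  assumes m: "m \<ge> 1" and D: "D \<ge> 1" and B: "B \<le> D ^ m" and c: "c \<le> m"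
  shows "c * ((m * D) * B ^ (m * D)) * ((2 * m) ^ ((m * D + 1) * m)) * (1 + m * m * (m * D * s)) \<le> blowup m D * (1 + s)"
proof -
  define W where "W = 2 * m * D"
  have W1: "W \<ge> 1" using m D by (simp add: W_def)
  have mW: "m \<le> W" using D m by (simp add: W_def)
  have mDW: "m * D \<le> W" by (simp add: W_def)
  have h1: "c \<le> W" using c mW by simp
  have h2: "(m * D) * B ^ (m * D) \<le> W * W ^ (m * W)"
  proof (intro mult_mono)
    have "B ^ (m * D) \<le> (D ^ m) ^ (m * D)" using B by (simp add: power_mono)
    also have "\<dots> = D ^ (m * (m * D))" by (simp add: power_mult)
    also have "\<dots> \<le> W ^ (m * (m * D))" using D m by (intro power_mono) (auto simp: W_def)
    also have "\<dots> \<le> W ^ (m * W)" using W1 mDW by (intro power_increasing) auto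
    finally show "B ^ (m * D) \<le> W ^ (m * W)" .
  qed (use mDW in auto)
  have h3: "(2 * m) ^ ((m * D + 1) * m) \<le> W ^ (m * W + m)"
  proof -
    have "(2 * m) ^ ((m * D + 1) * m) \<le> W ^ ((m * D + 1) * m)" using D m by (intro power_mono) (auto simp: W_def)
    also have "\<dots> \<le> W ^ (m * W + m)"
    proof (intro power_increasing W1)
      have "(m * D + 1) * m = m * (m * D) + m" by (simp add: algebra_simps)
      also have "\<dots> \<le> m * W + m" using mDW by simp
      finally show "(m * D + 1) * m \<le> m * W + m" .
    qed
    finally show ?thesis .
  qed
  have h4: "1 + m * m * (m * D * s) \<le> W ^ 3 * (1 + s)"
  proof -
    have "m * m * (m * D) \<le> W ^ 3" unfolding W_def using m D
      by (simp add: power3_eq_cube algebra_simps mult_le_mono)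
    then have "m * m * (m * D) * s \<le> W ^ 3 * s" by (rule mult_le_mono1)
    then have "m * m * (m * D * s) \<le> W ^ 3 * s" by (simp add: mult.assoc)
    moreover have "1 \<le> W ^ 3" using W1 by simp
    ultimately have "1 + m * m * (m * D * s) \<le> W ^ 3 + W ^ 3 * s" by linarith
    then show ?thesis by (simp add: algebra_simps)
  qed
  have e: "1 + 1 + m * W + (m * W + m) + 3 = 2 * m * W + m + 5" by simp
  have "c * ((m * D) * B ^ (m * D)) * ((2 * m) ^ ((m * D + 1) * m)) * (1 + m * m * (m * D * s))
      \<le> W * (W * W ^ (m * W)) * W ^ (m * W + m) * (W ^ 3 * (1 + s))"
    by (rule mult_mono[OF mult_mono[OF mult_mono[OF h1 h2] h3] h4]) auto
  also have "\<dots> = W ^ (1 + 1 + m * W + (m * W + m) + 3) * (1 + s)"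
    unfolding power_add power_one_right by (simp only: ac_simps)
  also have "\<dots> = W ^ (2 * m * W + m + 5) * (1 + s)" by (simp only: e)
  also have "\<dots> = blowup m D * (1 + s)" unfolding blowup_def W_def by simp
  finally show ?thesis .
qed

definition and_by_systems :: "nat \<Rightarrow> nat \<Rightarrow> nat \<Rightarrow> nat \<Rightarrow> nat \<Rightarrow> bool" where
  "and_by_systems m n d N s \<longleftrightarrow> (\<forall>p\<in>prime_factors m. \<forall>S\<subseteq>{..<n}. card S \<le> N \<longrightarrow>
     and_system m n d s (prime_factors m - {p}) S)"

definition at_prime :: "nat \<Rightarrow> (formula \<times> int) multiset \<Rightarrow> (formula \<times> (nat \<Rightarrow> int)) multiset" where
  "at_prime q N = image_mset (\<lambda>p. (fst p, \<lambda>q'. if q' = q then snd p else 0)) N"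

lemma weighted_count_at_prime:
  "weighted_count m x (at_prime q0 N) q =
    (if q = q0 then (\<Sum>p\<in>#N. snd p * of_bool (eval_formula m x (fst p))) else 0)"
  unfolding at_prime_def by (induction N) (auto simp: weighted_count_def)

lemma total_size_at_prime: "total_size (at_prime q N) = total_size N"
  by (simp add: at_prime_def total_size_def multiset.map_comp o_def)

lemma cong_of_bool_1_iff: "q \<ge> 2 \<Longrightarrow> [of_bool b = (1::int)] (mod int q) \<longleftrightarrow> b"
  by (cases b) (auto simp: cong_def)

text \<open>All \<open>B = D ^ card Q\<close> blocks are satisfied iff their number of satisfied blocks equals \<open>B\<close>; as
  that number is at most \<open>B < (\<Prod>q\<in>Q. q ^ E q)\<close>, this can be checked modulo each \<open>q ^ E q\<close>.\<close>

lemma all_blocks_iff_cong_prime_powers: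
  fixes Sb :: "nat \<Rightarrow> nat set"
  assumes Q: "finite Q" "\<forall>q\<in>Q. prime q" "Q \<noteq> {}" and E: "\<forall>q\<in>Q. D < q ^ E q"
    and Sb: "\<forall>j<D ^ card Q. Sb j \<subseteq> S" "\<forall>i\<in>S. \<exists>j<D ^ card Q. i \<in> Sb j"
  shows "(\<forall>q\<in>Q. [card {j\<in>{..<D ^ card Q}. \<forall>i\<in>Sb j. x i} = D ^ card Q] (mod q ^ E q)) \<longleftrightarrow> (\<forall>i\<in>S. x i)"
proof -
  define B where "B = D ^ card Q"
  define Y where "Y = {j\<in>{..<B}. \<forall>i\<in>Sb j. x i}"
  have YB: "Y \<subseteq> {..<B}" by (auto simp: Y_def)
  have "(\<forall>q\<in>Q. [card Y = B] (mod q ^ E q)) \<longleftrightarrow> card Y = B"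
  proof
    obtain q0 where "q0 \<in> Q" using Q(3) by blast
    moreover have "q > 0" if "q \<in> Q" for q using that Q(2) prime_gt_0_nat by blast
    ultimately have "(\<Prod>q\<in>Q. D) < (\<Prod>q\<in>Q. q ^ E q)"
      using E Q(1) by (intro prod_mono_strict[of q0]) (auto simp: less_imp_le)
    then have "B < (\<Prod>q\<in>Q. q ^ E q)" by (simp add: B_def)
    moreover have "card Y \<le> B" using card_mono[OF finite_lessThan YB] by simp
    ultimately show "\<forall>q\<in>Q. [card Y = B] (mod q ^ E q) \<Longrightarrow> card Y = B"
      using eq_of_cong_prime_powers[OF Q(1,2)] by blast
  qed simp
  also have "\<dots> \<longleftrightarrow> Y = {..<B}"
    using card_subset_eq[OF finite_lessThan YB] by auto
  also have "\<dots> \<longleftrightarrow> (\<forall>j<B. \<forall>i\<in>Sb j. x i)"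
    unfolding Y_def by blast
  also have "\<dots> \<longleftrightarrow> (\<forall>i\<in>S. x i)"
  proof
    assume "\<forall>j<B. \<forall>i\<in>Sb j. x i"
    then show "\<forall>i\<in>S. x i" using Sb(2) unfolding B_def by blast
  next
    assume "\<forall>i\<in>S. x i"
    then show "\<forall>j<B. \<forall>i\<in>Sb j. x i" using Sb(1) unfolding B_def by blast
  qed
  finally show ?thesis unfolding Y_def B_def .
qed

lemma and_system_of_detectors:
  fixes Sb :: "nat \<Rightarrow> nat set" and Nq :: "nat \<Rightarrow> (formula \<times> int) multiset"
  assumes Q: "finite Q" "\<forall>q\<in>Q. prime q" "Q \<noteq> {}" and E: "\<forall>q\<in>Q. D < q ^ E q"
    and Sb: "\<forall>j<D ^ card Q. Sb j \<subseteq> S" "\<forall>i\<in>S. \<exists>j<D ^ card Q. i \<in> Sb j"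
    and ok: "\<forall>q\<in>Q. \<forall>p\<in>#Nq q. formula_ok m n d (fst p)" and size: "\<forall>q\<in>Q. total_size (Nq q) \<le> Z"
    and detect: "\<forall>q\<in>Q. \<forall>x. [(\<Sum>p\<in>#Nq q. snd p * of_bool (eval_formula m x (fst p)))
        = of_bool (card {j\<in>{..<D ^ card Q}. \<forall>i\<in>Sb j. x i} mod q ^ E q = D ^ card Q mod q ^ E q)] (mod int q)"
  shows "and_system m n d (card Q * Z) Q S"
proof -
  define M where "M = (\<Sum>q\<in>Q. at_prime q (Nq q))"
  have "[weighted_count m x M q = 1] (mod int q) \<longleftrightarrow>
      [card {j\<in>{..<D ^ card Q}. \<forall>i\<in>Sb j. x i} = D ^ card Q] (mod q ^ E q)" if q: "q \<in> Q" for q x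
  proof -
    have "weighted_count m x M q = (\<Sum>p\<in>#Nq q. snd p * of_bool (eval_formula m x (fst p)))"
      unfolding M_def weighted_count_sum weighted_count_at_prime using q Q(1) by (simp add: sum.delta)
    moreover have "[(\<Sum>p\<in>#Nq q. snd p * of_bool (eval_formula m x (fst p)))
        = of_bool (card {j\<in>{..<D ^ card Q}. \<forall>i\<in>Sb j. x i} mod q ^ E q = D ^ card Q mod q ^ E q)] (mod int q)"
      using detect q by blast
    ultimately have "[weighted_count m x M q
        = of_bool (card {j\<in>{..<D ^ card Q}. \<forall>i\<in>Sb j. x i} mod q ^ E q = D ^ card Q mod q ^ E q)] (mod int q)"
      by simp
    then have "[weighted_count m x M q = 1] (mod int q) \<longleftrightarrow>
        [of_bool (card {j\<in>{..<D ^ card Q}. \<forall>i\<in>Sb j. x i} mod q ^ E q = D ^ card Q mod q ^ E q) = (1::int)] (mod int q)"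
      by (meson cong_sym cong_trans)
    also have "\<dots> \<longleftrightarrow> [card {j\<in>{..<D ^ card Q}. \<forall>i\<in>Sb j. x i} = D ^ card Q] (mod q ^ E q)"
      using prime_ge_2_nat Q(2) q by (simp only: cong_of_bool_1_iff) (simp add: cong_def)
    finally show ?thesis .
  qed
  then have "system_holds m Q M (\<lambda>_. 1) x \<longleftrightarrow>
      (\<forall>q\<in>Q. [card {j\<in>{..<D ^ card Q}. \<forall>i\<in>Sb j. x i} = D ^ card Q] (mod q ^ E q))" for x
    unfolding system_holds_def by simp
  then have "system_holds m Q M (\<lambda>_. 1) x \<longleftrightarrow> (\<forall>i\<in>S. x i)" for x
    using all_blocks_iff_cong_prime_powers[OF Q E Sb] by blast
  moreover have "\<forall>p\<in>#M. formula_ok m n d (fst p)"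
  proof
    fix p assume "p \<in># M"
    then obtain q where "q \<in> Q" "p \<in># at_prime q (Nq q)" unfolding M_def by (blast dest: mem_sum_mset)
    then obtain p' where "p' \<in># Nq q" "fst p = fst p'" unfolding at_prime_def in_image_mset by force
    then show "formula_ok m n d (fst p)" using ok \<open>q \<in> Q\<close> by simp
  qed
  moreover have "total_size M \<le> card Q * Z"
    unfolding M_def total_size_sum total_size_at_prime
    using sum_bounded_above[of Q "\<lambda>q. total_size (Nq q)" Z] size by simp
  ultimately show ?thesis
    unfolding and_system_def by (intro exI[of _ M] exI[of _ "\<lambda>_. 1"]) blast
qed

lemma and_system_step:
  assumes m: "m > 0" and hyp: "and_by_systems m n d N s"
    and Q: "Q \<subseteq> prime_factors m" "Q \<noteq> {}" and D: "D \<ge> 1"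
    and S: "S \<subseteq> {..<n}" "card S \<le> N * D ^ card Q"
  shows "and_system m n (Suc d) (blowup m D * (1 + s)) Q S"
proof -
  define B where "B = D ^ card Q"
  define Z where "Z = (m * D) * B ^ (m * D) * (2 * m) ^ ((m * D + 1) * m) * (1 + m * m * (m * D * s))"
  have finQ: "finite Q" and primeQ: "\<forall>q\<in>Q. prime q" using Q(1) finite_subset by auto
  have "finite S" using S(1) finite_subset by blast
  then obtain Sb where Sb: "\<forall>j<B. Sb j \<subseteq> S \<and> card (Sb j) \<le> N" "\<forall>i\<in>S. \<exists>j<B. i \<in> Sb j"
    using S(2) unfolding B_def by (rule partition_into_blocks)
  have "\<exists>e. D < q ^ e \<and> q ^ e \<le> m * D" if q: "q \<in> Q" for q
  proof -
    obtain e where e: "D < q ^ e" "q ^ e \<le> q * D"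
      using exists_prime_power_between[OF _ D] primeQ q by blast
    have "q \<le> m" using q Q(1) m by (auto intro: dvd_imp_le)
    then have "q ^ e \<le> m * D" using e(2) mult_le_mono1 le_trans by blast
    with e(1) show ?thesis by blast
  qed
  then obtain E where E: "\<And>q. q \<in> Q \<Longrightarrow> D < q ^ E q \<and> q ^ E q \<le> m * D"
    using bchoice[of Q "\<lambda>q e. D < q ^ e \<and> q ^ e \<le> m * D"] by blast
  define detector where "detector q Nq \<longleftrightarrow> (\<forall>p\<in>#Nq. formula_ok m n (Suc d) (fst p)) \<and> total_size Nq \<le> Z \<and>
      (\<forall>x. [(\<Sum>p\<in>#Nq. snd p * of_bool (eval_formula m x (fst p)))
        = of_bool (card {j\<in>{..<B}. \<forall>i\<in>Sb j. x i} mod q ^ E q = B mod q ^ E q)] (mod int q))"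
    for q and Nq :: "(formula \<times> int) multiset"
  have "\<exists>Nq. detector q Nq" if q: "q \<in> Q" for q
  proof -
    have qP: "q \<in> prime_factors m" and K: "q ^ E q \<le> m * D" using q Q(1) E by auto
    have "and_system m n d s (prime_factors m - {q}) (Sb j)" if "j < B" for j
    proof -
      have "Sb j \<subseteq> {..<n}" "card (Sb j) \<le> N" using Sb(1) S(1) that by auto
      then show ?thesis using hyp qP unfolding and_by_systems_def by blast
    qed
    then have "\<forall>j\<in>{..<B}. and_system m n d s (prime_factors m - {q}) (Sb j)" by simp
    from mod_prime_detector[OF m qP finite_lessThan K this, where u = "B mod q ^ E q"]
    obtain Nq where Nq: "\<forall>p\<in>#Nq. formula_ok m n (Suc d) (fst p)"
      "total_size Nq \<le> card {V. V \<subseteq> {..<B} \<and> card V < q ^ E q} * (2 * m) ^ ((m * D + 1) * m) * (1 + m * m * (m * D * s))"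
      "\<forall>x. [(\<Sum>p\<in>#Nq. snd p * of_bool (eval_formula m x (fst p)))
        = of_bool (card {j\<in>{..<B}. \<forall>i\<in>Sb j. x i} mod q ^ E q = B mod q ^ E q)] (mod int q)"
      by blast
    have "card {V. V \<subseteq> {..<B} \<and> card V < q ^ E q} \<le> card {V. V \<subseteq> {..<B} \<and> card V < m * D}"
      using K by (intro card_mono) (auto intro: finite_subset[of _ "Pow {..<B}"])
    also have "\<dots> \<le> (m * D) * B ^ (m * D)"
      using D by (intro card_small_subsets_le) (simp add: B_def)
    finally have "total_size Nq \<le> Z"
      using Nq(2) unfolding Z_def by (meson le_trans mult_le_mono1)
    then show ?thesis using Nq(1,3) unfolding detector_def by blast
  qed
  then obtain Nq where Nq: "\<And>q. q \<in> Q \<Longrightarrow> detector q (Nq q)"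
    using bchoice[of Q detector] by blast
  have "\<forall>q\<in>Q. D < q ^ E q" "\<forall>j<D ^ card Q. Sb j \<subseteq> S" "\<forall>i\<in>S. \<exists>j<D ^ card Q. i \<in> Sb j"
    using E Sb unfolding B_def by auto
  moreover have "\<forall>q\<in>Q. \<forall>p\<in>#Nq q. formula_ok m n (Suc d) (fst p)" "\<forall>q\<in>Q. total_size (Nq q) \<le> Z"
      "\<forall>q\<in>Q. \<forall>x. [(\<Sum>p\<in>#Nq q. snd p * of_bool (eval_formula m x (fst p))) = of_bool
        (card {j\<in>{..<D ^ card Q}. \<forall>i\<in>Sb j. x i} mod q ^ E q = D ^ card Q mod q ^ E q)] (mod int q)"
    using Nq unfolding detector_def B_def by blast+
  ultimately have "and_system m n (Suc d) (card Q * Z) Q S"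
    by (rule and_system_of_detectors[OF finQ primeQ Q(2)])
  moreover have "card Q * Z = card Q * ((m * D) * B ^ (m * D)) * (2 * m) ^ ((m * D + 1) * m) *
      (1 + m * m * (m * D * s))"
    unfolding Z_def by (simp only: mult.assoc)
  moreover have "\<dots> \<le> blowup m D * (1 + s)"
  proof (rule blowup_bound)
    have "card Q \<le> card (prime_factors m)" using Q(1) by (intro card_mono) auto
    then show "card Q \<le> m" using card_prime_factors_le[OF m] by simp
    then show "B \<le> D ^ m" unfolding B_def using D by (intro power_increasing) auto
  qed (use m D in auto)
  ultimately show ?thesis using and_system_mono by metis
qed

lemma and_by_systems_base:
  assumes r: "card (prime_factors m) \<ge> 2"
  shows "and_by_systems m n 0 1 0"
  unfolding and_by_systems_def
proof (intro ballI allI impI)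
  fix p S assume p: "p \<in> prime_factors m" and S: "S \<subseteq> {..<n}" "card S \<le> 1"
  define P where "P = prime_factors m - {p}"
  have "card P = card (prime_factors m) - 1" using p by (simp add: P_def)
  then have "P \<noteq> {}" using r by (intro notI) simp
  show "and_system m n 0 0 (prime_factors m - {p}) S"
    unfolding P_def[symmetric] and_system_def
  proof (cases "S = {}")
    case True
    have "system_holds m P {#} (\<lambda>_. 0) x" for x by (simp add: system_holds_def weighted_count_def)
    then show "\<exists>M T. (\<forall>p\<in>#M. formula_ok m n 0 (fst p)) \<and> total_size M \<le> 0 \<and>
        (\<forall>x. system_holds m P M T x \<longleftrightarrow> (\<forall>i\<in>S. x i))"
      using True by (intro exI[of _ "{#}"] exI[of _ "\<lambda>_. 0"]) (simp add: total_size_def)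
  next
    case False
    have "finite S" using S(1) finite_subset by blast
    with False have "card S \<noteq> 0" by simp
    with S(2) have "card S = 1" by linarith
    then obtain i where i: "S = {i}" by (rule card_1_singletonE)
    have "[of_bool (x i) = (1::int)] (mod int q) \<longleftrightarrow> x i" if "q \<in> P" for q x
      using that prime_ge_2_nat by (intro cong_of_bool_1_iff) (auto simp: P_def)
    then have "system_holds m P {#(Input i, \<lambda>_. 1)#} (\<lambda>_. 1) x \<longleftrightarrow> x i" for x
      unfolding system_holds_def weighted_count_single using \<open>P \<noteq> {}\<close> by auto
    then show "\<exists>M T. (\<forall>p\<in>#M. formula_ok m n 0 (fst p)) \<and> total_size M \<le> 0 \<and>
        (\<forall>x. system_holds m P M T x \<longleftrightarrow> (\<forall>i\<in>S. x i))"
      using i S(1) by (intro exI[of _ "{#(Input i, \<lambda>_. 1)#}"] exI[of _ "\<lambda>_. 1::int"])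
        (auto simp: total_size_def formula_ok_def)
  qed
qed

lemma and_by_systems_Suc:
  assumes m: "m > 0" and r: "card (prime_factors m) \<ge> 2" and hyp: "and_by_systems m n d N s"
    and D: "D \<ge> 1"
  shows "and_by_systems m n (Suc d) (N * D ^ (card (prime_factors m) - 1)) (blowup m D * (1 + s))"
  unfolding and_by_systems_def
proof (intro ballI allI impI)
  fix p S assume p: "p \<in> prime_factors m" and S: "S \<subseteq> {..<n}"
    and card_S: "card S \<le> N * D ^ (card (prime_factors m) - 1)"
  have card_Q: "card (prime_factors m - {p}) = card (prime_factors m) - 1" using p by simp
  then have "prime_factors m - {p} \<noteq> {}" using r by (intro notI) simp
  with card_Q show "and_system m n (Suc d) (blowup m D * (1 + s)) (prime_factors m - {p}) S"
    using and_system_step[OF m hyp _ _ D S] card_S by simp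
qed

primrec size_bound :: "nat \<Rightarrow> nat \<Rightarrow> nat \<Rightarrow> nat" where
  "size_bound m D 0 = 0"
| "size_bound m D (Suc k) = blowup m D * (1 + size_bound m D k)"

lemma and_by_systems_iter:
  assumes m: "m > 0" and r: "card (prime_factors m) \<ge> 2" and D: "D \<ge> 1"
  shows "and_by_systems m n k (D ^ ((card (prime_factors m) - 1) * k)) (size_bound m D k)"
proof (induction k)
  case 0
  then show ?case using and_by_systems_base[OF r] by simp
next
  case (Suc k)
  from and_by_systems_Suc[OF m r Suc D] show ?case
    by (simp add: power_add mult.commute)
qed

text \<open>Single-input gates accepting \<open>{1}\<close> (identity gates, as \<open>m \<ge> 2\<close>) raise the depth to exactly \<open>h\<close>.\<close>

fun pad :: "nat \<Rightarrow> formula \<Rightarrow> formula" where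
  "pad 0 F = F"
| "pad (Suc k) F = Gate {1} [pad k F]"

lemma pad_props:
  assumes "m \<ge> 2"
  shows "eval_formula m x (pad k F) = eval_formula m x F" "formula_depth (pad k F) = formula_depth F + k"
    "formula_size (pad k F) = formula_size F + k" "formula_vars (pad k F) = formula_vars F"
    "formula_wf m (pad k F) = formula_wf m F"
  using assms by (induction k) auto

lemma and_formula:
  assumes m: "m > 0" and r: "card (prime_factors m) \<ge> 2" and D: "D \<ge> 1" and h: "h \<ge> 2"
    and n: "n \<le> D ^ ((card (prime_factors m) - 1) * (h - 2) + card (prime_factors m))"
  shows "\<exists>F. formula_vars F \<subseteq> {..<n} \<and> formula_wf m F \<and> formula_depth F = h \<and>
    (\<forall>x. eval_formula m x F = (\<forall>i<n. x i)) \<and>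
    formula_size F \<le> 1 + m * m * (blowup m D * (1 + size_bound m D (h - 2))) + h"
proof -
  have "m \<noteq> 1" using r by auto
  with m have m2: "m \<ge> 2" by simp
  have "prime_factors m \<noteq> {}" using r by auto
  moreover have "card {..<n} \<le> D ^ ((card (prime_factors m) - 1) * (h - 2)) * D ^ card (prime_factors m)"
    using n by (simp add: power_add)
  ultimately obtain M T where M: "\<forall>p\<in>#M. formula_ok m n (Suc (h - 2)) (fst p)"
      "total_size M \<le> blowup m D * (1 + size_bound m D (h - 2))"
      "\<forall>x. system_holds m (prime_factors m) M T x \<longleftrightarrow> (\<forall>i\<in>{..<n}. x i)"
    using and_system_step[OF m and_by_systems_iter[OF m r D] order_refl _ D order_refl]
    unfolding and_system_def by blast
  obtain F0 where F0: "formula_ok m n (Suc (Suc (h - 2))) F0"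
      "\<forall>x. eval_formula m x F0 = system_holds m (prime_factors m) M T x"
      "formula_size F0 \<le> 1 + m * m * total_size M"
    using system_gate[OF order_refl m M(1)] by blast
  have "Suc (Suc (h - 2)) = h" using h by simp
  then have depth: "formula_depth F0 \<le> h" using F0(1) unfolding formula_ok_def by simp
  define F where "F = pad (h - formula_depth F0) F0"
  have "formula_size F \<le> 1 + m * m * (blowup m D * (1 + size_bound m D (h - 2))) + h"
    unfolding F_def pad_props[OF m2] using F0(3) M(2)
    by (meson add_le_mono diff_le_self le_trans mult_le_mono2 add_left_mono)
  moreover have "formula_depth F = h" "formula_vars F \<subseteq> {..<n}" "formula_wf m F"
    unfolding F_def pad_props[OF m2] using depth F0(1) by (auto simp: formula_ok_def)
  moreover have "eval_formula m x F = (\<forall>i<n. x i)" for x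
  proof -
    have "eval_formula m x F0 = (\<forall>i\<in>{..<n}. x i)" using F0(2) M(3) by simp
    then show ?thesis unfolding F_def pad_props[OF m2] Ball_def lessThan_iff .
  qed
  ultimately show ?thesis by blast
qed


lemma size_bound_le: "blowup m D \<ge> 1 \<Longrightarrow> 1 + size_bound m D k \<le> (2 * blowup m D) ^ k"
proof (induction k)
  case (Suc k)
  have "1 + size_bound m D (Suc k) \<le> 2 * blowup m D * (1 + size_bound m D k)"
    using Suc.prems by simp
  also have "\<dots> \<le> 2 * blowup m D * (2 * blowup m D) ^ k" using Suc by (intro mult_le_mono2) simp
  finally show ?case by simp
qed simp

definition size_exponent :: "nat \<Rightarrow> nat \<Rightarrow> nat" where
  "size_exponent m h = h * (4 * m * m + m + 6) + m * m + h + 1"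

lemma and_formula_size_le:
  assumes m: "m \<ge> 2" and D: "D \<ge> 1" and h: "h \<ge> 2"
  shows "1 + m * m * (blowup m D * (1 + size_bound m D (h - 2))) + h \<le> (2 * m * D) ^ (size_exponent m h * D)"
proof -
  define W where "W = 2 * m * D"
  define g where "g = 2 * m * W + m + 5"
  have "2 * 1 * 1 \<le> 2 * m * D" using m D by (intro mult_le_mono) auto
  then have W2: "W \<ge> 2" by (simp add: W_def)
  have blowup: "blowup m D = W ^ g" unfolding blowup_def W_def g_def by simp
  have G1: "blowup m D \<ge> 1" using W2 blowup by simp
  have G2: "2 * blowup m D \<le> W ^ (g + 1)" using W2 blowup by simp
  have "1 + m * m * (blowup m D * (1 + size_bound m D (h - 2))) + h \<le> 1 + m * m * (blowup m D * (2 * blowup m D) ^ (h - 2)) + h"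
  proof -
    have "blowup m D * (1 + size_bound m D (h - 2)) \<le> blowup m D * (2 * blowup m D) ^ (h - 2)"
      using size_bound_le[OF G1, of "h - 2"] by (rule mult_le_mono2)
    then show ?thesis by simp
  qed
  also have "\<dots> \<le> (1 + m * m + h) * (2 * blowup m D) ^ (h - 1)"
  proof -
    define X where "X = (2 * blowup m D) ^ (h - 1)"
    have "X = 2 * blowup m D * (2 * blowup m D) ^ (h - 2)"
      unfolding X_def using h by (metis Suc_diff_Suc Suc_1 less_le_trans lessI power_Suc diff_Suc_1 Suc_diff_le)
    then have "m * m * (blowup m D * (2 * blowup m D) ^ (h - 2)) \<le> m * m * X" by simp
    moreover have "1 \<le> X" using G1 by (simp add: X_def)
    moreover have "h \<le> h * X" using \<open>1 \<le> X\<close> by simp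
    moreover have "(1 + m * m + h) * X = X + m * m * X + h * X" by (simp add: algebra_simps)
    ultimately show ?thesis unfolding X_def[symmetric] by linarith
  qed
  also have "\<dots> \<le> W ^ (1 + m * m + h) * (W ^ (g + 1)) ^ (h - 1)"
  proof (intro mult_mono power_mono G2)
    have "1 + m * m + h < 2 ^ (1 + m * m + h)" by (rule less_exp)
    also have "\<dots> \<le> W ^ (1 + m * m + h)" using W2 by (intro power_mono) auto
    finally show "1 + m * m + h \<le> W ^ (1 + m * m + h)" by simp
  qed auto
  also have "\<dots> = W ^ (1 + m * m + h + (g + 1) * (h - 1))" by (simp only: power_add power_mult)
  also have "\<dots> \<le> W ^ (size_exponent m h * D)"
  proof (intro power_increasing)
    have "(g + 1) * (h - 1) \<le> (4 * m * m * D + m + 6) * h"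
      unfolding g_def W_def by (intro mult_le_mono) (auto simp: algebra_simps)
    also have "\<dots> \<le> (4 * m * m + m + 6) * D * h"
    proof (intro mult_le_mono1)
      have "(m + 6) * 1 \<le> (m + 6) * D" using D by (rule mult_le_mono2)
      then show "4 * m * m * D + m + 6 \<le> (4 * m * m + m + 6) * D" by (simp add: algebra_simps)
    qed
    finally have a: "(g + 1) * (h - 1) \<le> h * (4 * m * m + m + 6) * D" by (simp add: algebra_simps)
    have "(m * m + h + 1) * 1 \<le> (m * m + h + 1) * D" using D by (rule mult_le_mono2)
    then have b: "1 + m * m + h \<le> (m * m + h + 1) * D" by simp
    show "1 + m * m + h + (g + 1) * (h - 1) \<le> size_exponent m h * D"
      using a b unfolding size_exponent_def by (simp add: algebra_simps)
  qed (use W2 in auto)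
  finally show ?thesis unfolding W_def .
qed


lemma ceiling_root:
  fixes n k :: nat
  assumes n: "n \<ge> 1" and k: "k \<ge> 1"
  defines "D \<equiv> nat \<lceil>real n powr (1 / real k)\<rceil>"
  shows "D \<ge> 1" "n \<le> D ^ k" "real D \<le> 2 * real n powr (1 / real k)"
proof -
  define a where "a = real n powr (1 / real k)"
  have a1: "a \<ge> 1" unfolding a_def using n by (intro ge_one_powr_ge_zero) auto
  have D: "real D = of_int \<lceil>a\<rceil>" unfolding D_def a_def using a1 a_def by simp
  show "D \<ge> 1" using D a1 by linarith
  show "real D \<le> 2 * real n powr (1 / real k)" using D a1 unfolding a_def by linarith
  have "real n = a ^ k"
    unfolding a_def using n k by (simp add: powr_realpow[symmetric] powr_powr)
  also have "\<dots> \<le> real D ^ k" using a1 D by (intro power_mono) auto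
  finally show "n \<le> D ^ k" by (metis of_nat_le_iff of_nat_power)
qed

lemma power_le_two_powr:
  fixes W E :: nat and x a :: real
  assumes W: "W \<ge> 1" "real W \<le> x * x" and x: "x \<ge> 1" and E: "real E \<le> a"
  shows "real (W ^ E) \<le> 2 powr (2 / ln 2 * a * ln x)"
proof -
  have W0: "real W > 0" using W by simp
  have "log 2 (real W) \<le> log 2 (x * x)" using W0 W(2) by simp
  also have "\<dots> = 2 * ln x / ln 2" using x by (simp add: log_def ln_mult)
  finally have log_W: "log 2 (real W) \<le> 2 * ln x / ln 2" .
  have "real (W ^ E) = 2 powr (log 2 (real W) * real E)"
    using W0 by (simp add: powr_powr[symmetric] powr_realpow)
  also have "\<dots> \<le> 2 powr (2 * ln x / ln 2 * a)"
    using W x E log_W by (intro powr_mono mult_mono) auto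
  finally show ?thesis by (simp add: mult_ac)
qed

lemma size_le_two_powr:
  fixes n m k k' C :: nat
  assumes m: "m \<ge> 1" and n: "n \<ge> 4 * m" and k: "k \<ge> 1" "k \<le> k'"
  defines "D \<equiv> nat \<lceil>real n powr (1 / real k')\<rceil>"
  shows "real ((2 * m * D) ^ (C * D)) \<le> 2 powr (4 * real C / ln 2 * real n powr (1 / real k) * ln (real n))"
proof -
  have n1: "n \<ge> 1" using n m by simp
  note D = ceiling_root[OF n1 order_trans[OF k], folded D_def]
  have "real n powr (1 / real k') \<le> real n powr (1 / real k)"
    using n1 k by (intro powr_mono) (auto simp: frac_le)
  moreover have "real n powr (1 / real k) \<le> real n powr 1"
    using n1 k by (intro powr_mono) auto
  ultimately have D_le: "real D \<le> 2 * real n powr (1 / real k)" "real D \<le> 2 * real n"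
    using D(3) n1 by auto
  have "real (2 * m * D) \<le> 2 * real m * (2 * real n)"
    using mult_left_mono[OF D_le(2), of "2 * real m"] by simp
  also have "\<dots> = real (4 * m) * real n" by simp
  also have "\<dots> \<le> real n * real n" using n by (intro mult_right_mono) auto
  finally have "real (2 * m * D) \<le> real n * real n" .
  moreover have "real (C * D) \<le> 2 * real C * real n powr (1 / real k)"
    using mult_left_mono[OF D_le(1), of "real C"] by (simp add: mult_ac)
  ultimately have "real ((2 * m * D) ^ (C * D)) \<le> 2 powr (2 / ln 2 * (2 * real C * real n powr (1 / real k)) * ln (real n))"
    using m D(1) n1 by (intro power_le_two_powr) auto
  then show ?thesis by (simp add: mult_ac)
qed

lemma AND_circuit:
  fixes h m n k :: nat
  assumes h: "h \<ge> 2" and r: "card (prime_factors m) \<ge> 2" and n: "n \<ge> 4 * m"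
    and k: "k \<ge> 1" "k \<le> (card (prime_factors m) - 1) * (h - 2) + card (prime_factors m)"
  shows "\<exists>C. is_CC_circuit h m n C \<and> computes m n C (AND_fun n) \<and>
    real (csize C) \<le> 2 powr (4 * real (size_exponent m h) / ln 2 * real n powr (1 / real k) * ln (real n))"
proof -
  define k' where "k' = (card (prime_factors m) - 1) * (h - 2) + card (prime_factors m)"
  define D where "D = nat \<lceil>real n powr (1 / real k')\<rceil>"
  have m2: "m \<ge> 2" using r by (cases "m = 0 \<or> m = 1") auto
  then have "n \<ge> 1" using n by simp
  note D = ceiling_root[OF this order_trans[OF k[folded k'_def]], folded D_def]
  obtain F where F: "formula_vars F \<subseteq> {..<n}" "formula_wf m F" "formula_depth F = h"
      "\<forall>x. eval_formula m x F = (\<forall>i<n. x i)"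
      "formula_size F \<le> 1 + m * m * (blowup m D * (1 + size_bound m D (h - 2))) + h"
    using and_formula[OF _ r D(1) h D(2)[unfolded k'_def]] m2 by auto
  obtain C where C: "is_CC_circuit h m n C" "\<forall>x. circ_eval m n C x = eval_formula m x F"
      "csize C = formula_size F"
    using formula_circuit[OF F(1-3)] h by auto
  have "csize C \<le> (2 * m * D) ^ (size_exponent m h * D)"
    using le_trans[OF F(5) and_formula_size_le[OF m2 D(1) h]] C(3) by simp
  then have "real (csize C) \<le> real ((2 * m * D) ^ (size_exponent m h * D))"
    by (simp only: of_nat_le_iff)
  also have "\<dots> \<le> 2 powr (4 * real (size_exponent m h) / ln 2 * real n powr (1 / real k) * ln (real n))"
    unfolding D_def using m2 n k by (intro size_le_two_powr) (auto simp: k'_def)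
  finally show ?thesis using C F(4) unfolding computes_def AND_fun_def by auto
qed

text \<open>The construction gives the exponent \<open>(\<omega> - 1) * (h - 2) + \<omega>\<close>, which implies the claim as
  \<open>\<varpi> \<le> \<omega>\<close>.\<close>

theorem theorem1p2:
  fixes h m :: nat
  assumes "h \<ge> 3" and "m \<ge> 1" and "omega_m m \<ge> 2"
  shows "\<exists>c>0. \<exists>N. \<forall>n\<ge>N. \<exists>C.
           is_CC_circuit h m n C \<and> computes m n C (AND_fun n) \<and>
           real (csize C) \<le> 2 powr (c * real n powr
              (1 / real ((omega_m m - 1) * (h - 2) + varpi_m m)) * ln (real n))"
proof -
  define r where "r = omega_m m"
  define k where "k = (r - 1) * (h - 2) + varpi_m m"
  have r: "card (prime_factors m) = r" "r \<ge> 2" using assms(3) by (simp_all add: r_def omega_m_def)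
  have "1 * 1 \<le> (r - 1) * (h - 2)" using assms(1) r by (intro mult_le_mono) auto
  moreover have "varpi_m m \<le> r" unfolding varpi_m_def r(1)[symmetric] by (intro card_mono) auto
  ultimately have k: "k \<ge> 1" "k \<le> (r - 1) * (h - 2) + r" unfolding k_def by linarith+
  define c where "c = 4 * real (size_exponent m h) / ln 2"
  have "size_exponent m h > 0" by (simp add: size_exponent_def)
  then have "c > 0" unfolding c_def by (intro divide_pos_pos) auto
  moreover have "\<forall>n\<ge>4 * m. \<exists>C. is_CC_circuit h m n C \<and> computes m n C (AND_fun n) \<and>
      real (csize C) \<le> 2 powr (c * real n powr (1 / real k) * ln (real n))"
    using AND_circuit[of h m _ k] assms(1) r k unfolding c_def by auto
  ultimately show ?thesis unfolding k_def r_def by blast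
qed

end
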